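(* Let $(H,\alpha_H)$ be an object of $\overline{\mathcal H}^{i,j}(Vec_\Bbbk)$, and let $m_H:H\otimes H\to H$ (written $a\otimes b\mapsto ab$) and $\eta_H:\Bbbk\to H$ (with $\eta_H(1)=1_H$) be morphisms in $\overline{\mathcal H}^{i,j}(Vec_\Bbbk)$. For the functor $\ddot H=-\otimes H$, $(X,\alpha_X)\mapsto(X\otimes H,\alpha_X\otimes\alpha_H)$, define $\ddot H_2(X,Y):(X\otimes H)\otimes(Y\otimes H)\to(X\otimes Y)\otimes H$, $(x\otimes a)\otimes(y\otimes b)\mapsto(x\otimes y)\otimes\alpha_H^i(a)\alpha_H^j(b)$, and $\ddot H_0:\Bbbk\to\Bbbk\otimes H$, $\lambda\mapsto\lambda\otimes 1_H$. Then $(\ddot H,\ddot H_2,\ddot H_0)$ is a monoidal functor on $\overline{\mathcal H}^{i,j}(Vec_\Bbbk)$ if and only if $(H,\alpha_H,m_H,\eta_H)$ is a Hom-algebra.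
   Context: $\Bbbk$ is a field of characteristic $0$; all vector spaces are finite-dimensional; $i,j$ are fixed integers. $\overline{\mathcal H}^{i,j}(Vec_\Bbbk)$ is the monoidal category whose objects are pairs $(X,\alpha_X)$ with $X$ a finite-dimensional $\Bbbk$-space and $\alpha_X$ a linear automorphism; morphisms are linear maps commuting with the $\alpha$'s; $(X,\alpha_X)\otimes(Y,\alpha_Y)=(X\otimes Y,\alpha_X\otimes\alpha_Y)$, unit $(\Bbbk,\mathrm{id})$; associativity $a_{X,Y,Z}((x\otimes y)\otimes z)=\alpha_X^{i+1}(x)\otimes(y\otimes\alpha_Z^{-j-1}(z))$; $l_X(\lambda\otimes x)=\lambda\alpha_X^{j+1}(x)$, $r_X(x\otimes\lambda)=\lambda\alpha_X^{i+1}(x)$. A Hom-algebra $(A,\mu,1_A,\alpha)$ satisfies $\alpha(a)(bc)=(ab)\alpha(c)$, $\alpha(1_A)=1_A$, $1_Aa=a1_A=\alpha(a)$. A monoidal functor $(G,G_2,G_0)$ has natural $G_2(X,Y):GX\otimes GY\to G(X\otimes Y)$ and $G_0:I\to GI$ with $G_2(X,Y\otimes Z)\circ(\mathrm{id}\otimes G_2(Y,Z))\circ a_{GX,GY,GZ}=G(a_{X,Y,Z})\circ G_2(X\otimes Y,Z)\circ(G_2(X,Y)\otimes\mathrm{id})$ and $G(r_X)\circ G_2(X,I)\circ(\mathrm{id}\otimes G_0)\circ r_{GX}^{-1}=\mathrm{id}=G(l_X)\circ G_2(I,X)\circ(G_0\otimes\mathrm{id})\circ l_{GX}^{-1}$.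 *)

theory Defs
  imports "Jordan_Normal_Form.Matrix"
begin

text \<open>Concrete model of the category H-bar^{i,j}(Vec_k): a finite-dimensional space is
  k^n (column vectors), an object is given by its automorphism alpha_X, an invertible
  n x n matrix; morphisms are matrices commuting with the alphas.  The tensor product
  k^n (x) k^m is identified with k^(n*m) via the basis e_p (x) e_q |-> e_(p*m+q),
  i.e. tensor products of matrices/vectors are Kronecker products.  With this encoding
  the canonical reassociation (X(x)Y)(x)Z = X(x)(Y(x)Z) and k(x)X = X = X(x)k are the
  identity on coordinates.\<close>

definition kron :: "'a::semiring_1 mat \<Rightarrow> 'a mat \<Rightarrow> 'a mat" where
  "kron A B = mat (dim_row A * dim_row B) (dim_col A * dim_col B)
     (\<lambda>(r, c). A $$ (r div dim_row B, c div dim_col B) * B $$ (r mod dim_row B, c mod dim_col B))"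

definition vkron :: "'a::semiring_1 vec \<Rightarrow> 'a vec \<Rightarrow> 'a vec" where
  "vkron x y = vec (dim_vec x * dim_vec y) (\<lambda>k. x $ (k div dim_vec y) * y $ (k mod dim_vec y))"

definition inv_mat :: "'a::semiring_1 mat \<Rightarrow> 'a mat" where
  "inv_mat A = (SOME B. B \<in> carrier_mat (dim_row A) (dim_row A) \<and> inverts_mat A B \<and> inverts_mat B A)"

definition mpow_int :: "'a::semiring_1 mat \<Rightarrow> int \<Rightarrow> 'a mat" where
  "mpow_int A k = (if k \<ge> 0 then A ^\<^sub>m nat k else inv_mat A ^\<^sub>m nat (- k))"

definition is_obj :: "'a::field_char_0 mat \<Rightarrow> bool" where
  "is_obj A \<longleftrightarrow> A \<in> carrier_mat (dim_row A) (dim_row A) \<and> invertible_mat A"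

definition is_mor :: "'a::field_char_0 mat \<Rightarrow> 'a mat \<Rightarrow> 'a mat \<Rightarrow> bool" where
  "is_mor X Y f \<longleftrightarrow> f \<in> carrier_mat (dim_row Y) (dim_row X) \<and> f * X = Y * f"

definition unit_obj :: "'a::field_char_0 mat" where
  "unit_obj = 1\<^sub>m 1"

definition assoc_mat :: "int \<Rightarrow> int \<Rightarrow> 'a::field_char_0 mat \<Rightarrow> 'a mat \<Rightarrow> 'a mat \<Rightarrow> 'a mat" where
  "assoc_mat i j X Y Z = kron (kron (mpow_int X (i + 1)) (1\<^sub>m (dim_row Y))) (mpow_int Z (- j - 1))"

definition lunit_mat :: "int \<Rightarrow> 'a::field_char_0 mat \<Rightarrow> 'a mat" where
  "lunit_mat j X = mpow_int X (j + 1)"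

definition runit_mat :: "int \<Rightarrow> 'a::field_char_0 mat \<Rightarrow> 'a mat" where
  "runit_mat i X = mpow_int X (i + 1)"

definition hmul :: "'a::field_char_0 mat \<Rightarrow> 'a vec \<Rightarrow> 'a vec \<Rightarrow> 'a vec" where
  "hmul mH a b = mH *\<^sub>v vkron a b"

definition hone :: "'a::field_char_0 mat \<Rightarrow> 'a vec" where
  "hone etaH = etaH *\<^sub>v vec 1 (\<lambda>_. 1)"

definition hom_algebra :: "'a::field_char_0 mat \<Rightarrow> 'a mat \<Rightarrow> 'a mat \<Rightarrow> bool" where
  "hom_algebra aH mH etaH \<longleftrightarrow>
     (\<forall>a \<in> carrier_vec (dim_row aH). \<forall>b \<in> carrier_vec (dim_row aH). \<forall>c \<in> carrier_vec (dim_row aH).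
        hmul mH (aH *\<^sub>v a) (hmul mH b c) = hmul mH (hmul mH a b) (aH *\<^sub>v c)) \<and>
     aH *\<^sub>v hone etaH = hone etaH \<and>
     (\<forall>a \<in> carrier_vec (dim_row aH).
        hmul mH (hone etaH) a = aH *\<^sub>v a \<and> hmul mH a (hone etaH) = aH *\<^sub>v a)"

definition Hobj :: "'a::field_char_0 mat \<Rightarrow> 'a mat \<Rightarrow> 'a mat" where
  "Hobj aH X = kron X aH"

definition Hmor :: "'a::field_char_0 mat \<Rightarrow> 'a mat \<Rightarrow> 'a mat" where
  "Hmor aH f = kron f (1\<^sub>m (dim_row aH))"

text \<open>H2(X,Y) : (X(x)H)(x)(Y(x)H) -> (X(x)Y)(x)H,
  (x(x)a)(x)(y(x)b) |-> (x(x)y)(x) alpha_H^i(a) alpha_H^j(b).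
  Column index ((p*d+s)*(m*d) + q*d + t) corresponds to (e_p(x)e_s)(x)(e_q(x)e_t),
  row index ((p*m+q)*d + u) to (e_p(x)e_q)(x)e_u.\<close>
definition H2 :: "int \<Rightarrow> int \<Rightarrow> 'a::field_char_0 mat \<Rightarrow> 'a mat \<Rightarrow> 'a mat \<Rightarrow> 'a mat \<Rightarrow> 'a mat" where
  "H2 i j aH mH X Y =
    (let d = dim_row aH; n = dim_row X; m = dim_row Y in
     mat ((n * m) * d) ((n * d) * (m * d))
       (\<lambda>(r, c).
          let p = r div d div m; q = r div d mod m; u = r mod d;
              c1 = c div (m * d); c2 = c mod (m * d);
              p' = c1 div d; s = c1 mod d; q' = c2 div d; t = c2 mod d
          in if p = p' \<and> q = q'
             then (hmul mH (mpow_int aH i *\<^sub>v unit_vec d s) (mpow_int aH j *\<^sub>v unit_vec d t)) $ u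
             else 0))"

definition H0 :: "'a::field_char_0 mat \<Rightarrow> 'a mat" where
  "H0 etaH = kron (1\<^sub>m 1) etaH"

definition monoidal_functor_Hdd :: "int \<Rightarrow> int \<Rightarrow> 'a::field_char_0 mat \<Rightarrow> 'a mat \<Rightarrow> 'a mat \<Rightarrow> bool" where
  "monoidal_functor_Hdd i j aH mH etaH \<longleftrightarrow>
     \<comment> \<open>H2(X,Y) and H0 are morphisms of the category\<close>
     (\<forall>X Y. is_obj X \<longrightarrow> is_obj Y \<longrightarrow>
        is_mor (kron (Hobj aH X) (Hobj aH Y)) (Hobj aH (kron X Y)) (H2 i j aH mH X Y)) \<and>
     is_mor unit_obj (Hobj aH unit_obj) (H0 etaH) \<and>
     \<comment> \<open>naturality of H2\<close>
     (\<forall>X X' Y Y' f g. is_obj X \<longrightarrow> is_obj X' \<longrightarrow> is_obj Y \<longrightarrow> is_obj Y' \<longrightarrow>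
        is_mor X X' f \<longrightarrow> is_mor Y Y' g \<longrightarrow>
        H2 i j aH mH X' Y' * kron (Hmor aH f) (Hmor aH g) = Hmor aH (kron f g) * H2 i j aH mH X Y) \<and>
     \<comment> \<open>associativity (hexagon) axiom\<close>
     (\<forall>X Y Z. is_obj X \<longrightarrow> is_obj Y \<longrightarrow> is_obj Z \<longrightarrow>
        H2 i j aH mH X (kron Y Z) * kron (1\<^sub>m (dim_row (Hobj aH X))) (H2 i j aH mH Y Z)
          * assoc_mat i j (Hobj aH X) (Hobj aH Y) (Hobj aH Z)
        = Hmor aH (assoc_mat i j X Y Z) * H2 i j aH mH (kron X Y) Z
          * kron (H2 i j aH mH X Y) (1\<^sub>m (dim_row (Hobj aH Z)))) \<and>
     \<comment> \<open>unit axioms\<close>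
     (\<forall>X. is_obj X \<longrightarrow>
        Hmor aH (runit_mat i X) * H2 i j aH mH X unit_obj
          * kron (1\<^sub>m (dim_row (Hobj aH X))) (H0 etaH) * inv_mat (runit_mat i (Hobj aH X))
          = 1\<^sub>m (dim_row (Hobj aH X)) \<and>
        Hmor aH (lunit_mat j X) * H2 i j aH mH unit_obj X
          * kron (H0 etaH) (1\<^sub>m (dim_row (Hobj aH X))) * inv_mat (lunit_mat j (Hobj aH X))
          = 1\<^sub>m (dim_row (Hobj aH X)))"

end

theory Submission
  imports Defs
begin

text \<open>Every matrix in the monoidal-functor axioms for \<open>- \<otimes> H\<close> is assembled from Kronecker products,
  so two of them agree as soon as they agree on elementary tensors. On such tensors \<open>H\<^sub>2\<close> sends
  \<open>(x \<otimes> a) \<otimes> (y \<otimes> b)\<close> to \<open>(x \<otimes> y) \<otimes> \<alpha>\<^sup>i(a) \<alpha>\<^sup>j(b)\<close>, and both sides of each axiom act identically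
  on the \<open>X\<close>-, \<open>Y\<close>-, \<open>Z\<close>-components. What remains are identities in \<open>H\<close> alone. Since \<open>m\<^sub>H\<close> and
  \<open>\<eta>\<^sub>H\<close> are morphisms, every power of \<open>\<alpha>\<close> is multiplicative and fixes \<open>1\<^sub>H\<close>; hence after the invertible
  substitution \<open>a \<mapsto> \<alpha>\<^sup>2\<^sup>i a, b \<mapsto> \<alpha>\<^sup>i\<^sup>+\<^sup>j b, c \<mapsto> \<alpha>\<^sup>j\<^sup>-\<^sup>1 c\<close> the hexagon becomes
  \<open>\<alpha>(a)(bc) = (ab)\<alpha>(c)\<close>, and the two unit axioms become \<open>1\<^sub>H a = \<alpha>(a) = a 1\<^sub>H\<close>. The morphism and
  naturality conditions hold unconditionally, and specialising all objects to the unit object gives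
  the converse.\<close>

section \<open>Kronecker products\<close>

lemma sum_upt_mult_split:
  "(\<Sum>c\<in>{0..<n*m}. f c) = (\<Sum>p\<in>{0..<n}. \<Sum>q\<in>{0..<m}. f (p*m+q::nat))"
proof (induction n)
  case 0 then show ?case by simp
next
  case (Suc n)
  have "{0..<Suc n * m} = {0..<n*m} \<union> {n*m..<n*m+m}" by auto
  then have "(\<Sum>c\<in>{0..<Suc n*m}. f c) = (\<Sum>c\<in>{0..<n*m}. f c) + (\<Sum>c\<in>{n*m..<n*m+m}. f c)"
    by (simp add: sum.union_disjoint ivl_disj_int)
  also have "(\<Sum>c\<in>{n*m..<n*m+m}. f c) = (\<Sum>q\<in>{0..<m}. f (n*m+q))"
    using sum.shift_bounds_nat_ivl[of f "0" "n*m" m] by (simp add: add.commute)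
  finally show ?case using Suc by simp
qed

lemma mult_add_less_mult: "p < n \<Longrightarrow> q < (m::nat) \<Longrightarrow> p*m+q < n*m"
proof -
  assume "p < n" "q < m"
  then have "p*m + q < Suc p * m" by simp
  also have "\<dots> \<le> n*m" using \<open>p < n\<close> by (intro mult_le_mono1) simp
  finally show ?thesis .
qed

lemma mod_less_of_less_mult: "k < n*m \<Longrightarrow> k mod m < (m::nat)"
  by (cases "m = 0") auto

lemma dim_vkron [simp]: "dim_vec (vkron x y) = dim_vec x * dim_vec y"
  by (simp add: vkron_def)

lemma vkron_carrier_vec [simp]:
  "x \<in> carrier_vec n \<Longrightarrow> y \<in> carrier_vec m \<Longrightarrow> vkron x y \<in> carrier_vec (n*m)"
  by (intro carrier_vecI) (simp add: carrier_vecD)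

lemma index_vkron:
  "k < dim_vec x * dim_vec y \<Longrightarrow> vkron x y $ k = x $ (k div dim_vec y) * y $ (k mod dim_vec y)"
  by (simp add: vkron_def)

lemma index_vkron_mult_add:
  "x \<in> carrier_vec n \<Longrightarrow> y \<in> carrier_vec m \<Longrightarrow> s < n \<Longrightarrow> t < m \<Longrightarrow>
   vkron x y $ (s * m + t) = x $ s * y $ t"
  by (simp add: index_vkron mult_add_less_mult)

lemma dim_kron [simp]:
  "dim_row (kron A B) = dim_row A * dim_row B" "dim_col (kron A B) = dim_col A * dim_col B"
  by (simp_all add: kron_def)

lemma kron_carrier_mat [simp]:
  "A \<in> carrier_mat n1 m1 \<Longrightarrow> B \<in> carrier_mat n2 m2 \<Longrightarrow> kron A B \<in> carrier_mat (n1*n2) (m1*m2)"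
  by (intro carrier_matI) (simp_all add: carrier_matD)

lemma index_kron:
  "r < dim_row A * dim_row B \<Longrightarrow> c < dim_col A * dim_col B \<Longrightarrow>
   kron A B $$ (r,c) = A $$ (r div dim_row B, c div dim_col B) * B $$ (r mod dim_row B, c mod dim_col B)"
  by (simp add: kron_def)

lemma vkron_unit_vec:
  assumes "p < n" "q < m"
  shows "vkron (unit_vec n p) (unit_vec m q) = (unit_vec (n*m) (p*m+q) :: 'a::semiring_1 vec)"
proof (rule eq_vecI)
  fix k assume "k < dim_vec (unit_vec (n*m) (p*m+q) :: 'a vec)"
  then have k: "k < n*m" by simp
  have "k = p*m+q \<longleftrightarrow> k div m = p \<and> k mod m = q"
    using assms div_mult_mod_eq[of k m] by auto
  then show "vkron (unit_vec n p) (unit_vec m q) $ k = (unit_vec (n*m) (p*m+q) :: 'a vec) $ k"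
    using k assms by (auto simp: index_vkron unit_vec_def less_mult_imp_div_less mod_less_of_less_mult)
qed simp

lemma unit_vec_mult_split:
  "k < n*m \<Longrightarrow> (unit_vec (n*m) k :: 'a::semiring_1 vec) = vkron (unit_vec n (k div m)) (unit_vec m (k mod m))"
  by (subst vkron_unit_vec) (auto simp: less_mult_imp_div_less mod_less_of_less_mult)

lemma vkron_assoc: "vkron (vkron x y) z = vkron x (vkron y z)"
proof (rule eq_vecI)
  fix k assume k: "k < dim_vec (vkron x (vkron y z))"
  let ?m = "dim_vec y" and ?l = "dim_vec z"
  have k': "k < dim_vec x * (?m * ?l)" using k by simp
  have "k div ?l < dim_vec x * ?m" using k' by (simp add: less_mult_imp_div_less mult.assoc)
  moreover have "k div ?l div ?m = k div (?m * ?l)" by (metis div_mult2_eq mult.commute)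
  moreover have "k div ?l mod ?m = k mod (?m*?l) div ?l"
  proof -
    have "k mod (?m*?l) = ?l * (k div ?l mod ?m) + k mod ?l" by (metis mod_mult2_eq mult.commute)
    then show ?thesis by (cases "?l = 0") auto
  qed
  moreover have "k mod (?m*?l) mod ?l = k mod ?l" by (simp add: mod_mod_cancel)
  moreover have "k mod (?m * ?l) < ?m * ?l" using k' by (metis mod_less_of_less_mult mult.commute)
  ultimately show "vkron (vkron x y) z $ k = vkron x (vkron y z) $ k"
    using k' by (simp add: index_vkron mult.assoc mult.commute[of "?l" "?m"])
qed (simp add: mult.assoc)

lemma kron_mult_vkron:
  fixes A :: "'a::comm_semiring_1 mat"
  assumes A: "A \<in> carrier_mat n1 m1" and B: "B \<in> carrier_mat n2 m2"
    and x: "x \<in> carrier_vec m1" and y: "y \<in> carrier_vec m2"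
  shows "kron A B *\<^sub>v vkron x y = vkron (A *\<^sub>v x) (B *\<^sub>v y)"
proof (rule eq_vecI)
  fix r assume "r < dim_vec (vkron (A *\<^sub>v x) (B *\<^sub>v y))"
  then have r: "r < n1 * n2" using A B by simp
  have "(kron A B *\<^sub>v vkron x y) $ r = (\<Sum>c\<in>{0..<m1*m2}. kron A B $$ (r,c) * vkron x y $ c)"
    using r A B x y by (simp add: scalar_prod_def)
  also have "\<dots> = (\<Sum>p\<in>{0..<m1}. \<Sum>q\<in>{0..<m2}. kron A B $$ (r,p*m2+q) * vkron x y $ (p*m2+q))"
    by (rule sum_upt_mult_split)
  also have "\<dots> = (\<Sum>p\<in>{0..<m1}. \<Sum>q\<in>{0..<m2}. (A $$ (r div n2, p) * x $ p) * (B $$ (r mod n2, q) * y $ q))"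
    by (intro sum.cong refl) (use r A B x y in \<open>auto simp: index_kron index_vkron mult_add_less_mult mult_ac\<close>)
  also have "\<dots> = (\<Sum>p\<in>{0..<m1}. A $$ (r div n2, p) * x $ p) * (\<Sum>q\<in>{0..<m2}. B $$ (r mod n2, q) * y $ q)"
    by (simp add: sum_product)
  also have "\<dots> = vkron (A *\<^sub>v x) (B *\<^sub>v y) $ r"
    using r A B x y
    by (simp add: index_vkron scalar_prod_def less_mult_imp_div_less mod_less_of_less_mult row_def)
  finally show "(kron A B *\<^sub>v vkron x y) $ r = vkron (A *\<^sub>v x) (B *\<^sub>v y) $ r" .
qed (use A B in simp)

lemma kron_one_mult_vkron:
  "f \<in> carrier_mat n m \<Longrightarrow> x \<in> carrier_vec m \<Longrightarrow> h \<in> carrier_vec d \<Longrightarrow>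
   kron f (1\<^sub>m d) *\<^sub>v vkron x h = vkron (f *\<^sub>v x) (h :: 'a::comm_semiring_1 vec)"
  by (simp add: kron_mult_vkron[of f n m "1\<^sub>m d" d d])

lemma mat_eq_on_unit_vecI:
  fixes A :: "'a::comm_semiring_1 mat"
  assumes A: "A \<in> carrier_mat r c" and B: "B \<in> carrier_mat r c"
    and eq: "\<And>k. k < c \<Longrightarrow> A *\<^sub>v unit_vec c k = B *\<^sub>v unit_vec c k"
  shows "A = B"
proof (rule mat_col_eqI)
  have col: "col M k = M *\<^sub>v unit_vec c k" if "M \<in> carrier_mat r c" "k < c" for M :: "'a mat" and k
    by (rule eq_vecI) (use that in \<open>auto simp: col_def scalar_prod_right_unit\<close>)
  fix k assume "k < dim_col B"
  then show "col A k = col B k" using A B eq by (simp add: col)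
qed (use A B in auto)

lemma mat_eq_on_vkron_unit_vecI:
  fixes A :: "'a::comm_semiring_1 mat"
  assumes A: "A \<in> carrier_mat r (n*m)" and B: "B \<in> carrier_mat r (n*m)"
    and eq: "\<And>p q. p < n \<Longrightarrow> q < m \<Longrightarrow>
      A *\<^sub>v vkron (unit_vec n p) (unit_vec m q) = B *\<^sub>v vkron (unit_vec n p) (unit_vec m q)"
  shows "A = B"
proof (rule mat_eq_on_unit_vecI[OF A B])
  fix k assume k: "k < n*m"
  show "A *\<^sub>v unit_vec (n*m) k = B *\<^sub>v unit_vec (n*m) k"
    unfolding unit_vec_mult_split[OF k]
    by (rule eq) (use k in \<open>auto simp: less_mult_imp_div_less mod_less_of_less_mult\<close>)
qed

lemma mat_eq_on_vkronI:
  fixes A :: "'a::comm_semiring_1 mat"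
  assumes "A \<in> carrier_mat r (n*m)" and "B \<in> carrier_mat r (n*m)"
    and "\<And>x y. x \<in> carrier_vec n \<Longrightarrow> y \<in> carrier_vec m \<Longrightarrow> A *\<^sub>v vkron x y = B *\<^sub>v vkron x y"
  shows "A = B"
  using assms by (intro mat_eq_on_vkron_unit_vecI) auto

lemma mat_eq_on_vkron4I:
  fixes A :: "'a::comm_semiring_1 mat"
  assumes A: "A \<in> carrier_mat r ((n1*n2)*(n3*n4))" and B: "B \<in> carrier_mat r ((n1*n2)*(n3*n4))"
    and eq: "\<And>x a y b. x \<in> carrier_vec n1 \<Longrightarrow> a \<in> carrier_vec n2 \<Longrightarrow> y \<in> carrier_vec n3 \<Longrightarrow> b \<in> carrier_vec n4 \<Longrightarrow>
      A *\<^sub>v vkron (vkron x a) (vkron y b) = B *\<^sub>v vkron (vkron x a) (vkron y b)"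
  shows "A = B"
proof (rule mat_eq_on_vkron_unit_vecI[OF A B])
  fix p q assume p: "p < n1*n2" and q: "q < n3*n4"
  show "A *\<^sub>v vkron (unit_vec (n1*n2) p) (unit_vec (n3*n4) q) = B *\<^sub>v vkron (unit_vec (n1*n2) p) (unit_vec (n3*n4) q)"
    unfolding unit_vec_mult_split[OF p] unit_vec_mult_split[OF q] by (rule eq) auto
qed

lemma mat_eq_on_vkron6I:
  fixes A :: "'a::comm_semiring_1 mat"
  assumes "A \<in> carrier_mat r (((n1*n2)*(n3*n4))*(n5*n6))" and "B \<in> carrier_mat r (((n1*n2)*(n3*n4))*(n5*n6))"
    and "\<And>x a y b z c. x \<in> carrier_vec n1 \<Longrightarrow> a \<in> carrier_vec n2 \<Longrightarrow> y \<in> carrier_vec n3 \<Longrightarrow>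
      b \<in> carrier_vec n4 \<Longrightarrow> z \<in> carrier_vec n5 \<Longrightarrow> c \<in> carrier_vec n6 \<Longrightarrow>
      A *\<^sub>v vkron (vkron (vkron x a) (vkron y b)) (vkron z c)
        = B *\<^sub>v vkron (vkron (vkron x a) (vkron y b)) (vkron z c)"
  shows "A = B"
proof (rule mat_eq_on_vkron_unit_vecI[OF assms(1,2)])
  fix p q assume p: "p < (n1*n2)*(n3*n4)" and q: "q < n5*n6"
  have p1: "p div (n3*n4) < n1*n2" and p2: "p mod (n3*n4) < n3*n4"
    using p by (auto simp: less_mult_imp_div_less mod_less_of_less_mult)
  then show "A *\<^sub>v vkron (unit_vec ((n1*n2)*(n3*n4)) p) (unit_vec (n5*n6) q)
           = B *\<^sub>v vkron (unit_vec ((n1*n2)*(n3*n4)) p) (unit_vec (n5*n6) q)"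
    unfolding unit_vec_mult_split[OF p] unit_vec_mult_split[OF q]
      unit_vec_mult_split[OF p1] unit_vec_mult_split[OF p2]
    by (intro assms(3)) auto
qed

lemma kron_mult:
  fixes A :: "'a::comm_semiring_1 mat"
  assumes A: "A \<in> carrier_mat n1 k1" and C: "C \<in> carrier_mat k1 m1"
    and B: "B \<in> carrier_mat n2 k2" and D: "D \<in> carrier_mat k2 m2"
  shows "kron A B * kron C D = kron (A * C) (B * D)"
proof (rule mat_eq_on_vkronI[of _ "n1*n2" m1 m2])
  fix x y :: "'a vec" assume x: "x \<in> carrier_vec m1" and y: "y \<in> carrier_vec m2"
  have "kron A B * kron C D *\<^sub>v vkron x y = kron A B *\<^sub>v vkron (C *\<^sub>v x) (D *\<^sub>v y)"
    using A B C D x y by (simp add: kron_mult_vkron[OF C D x y] assoc_mult_mat_vec[of _ "n1*n2" "k1*k2" _ "m1*m2"])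
  also have "\<dots> = kron (A * C) (B * D) *\<^sub>v vkron x y"
    using A B C D x y by (simp add: kron_mult_vkron[of _ n1 k1 _ n2 k2] kron_mult_vkron[of _ n1 m1 _ n2 m2])
  finally show "kron A B * kron C D *\<^sub>v vkron x y = kron (A * C) (B * D) *\<^sub>v vkron x y" .
qed (use A B C D in auto)

lemma kron_one_mat: "kron (1\<^sub>m n) (1\<^sub>m m) = (1\<^sub>m (n*m) :: 'a::comm_semiring_1 mat)"
  by (rule mat_eq_on_vkronI[of _ "n*m" n m]) (auto simp: kron_mult_vkron[of _ n n _ m m])

lemma kron_one_1_left: "kron (1\<^sub>m 1) A = (A :: 'a::comm_semiring_1 mat)"
  by (rule eq_matI) (auto simp: index_kron)

lemma vkron_unit_vec_1_left: "vkron (unit_vec 1 0) h = (h :: 'a::semiring_1 vec)"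
  by (rule eq_vecI) (auto simp: index_vkron)

lemma vkron_unit_vec_1_right: "vkron h (unit_vec 1 0) = (h :: 'a::semiring_1 vec)"
  by (rule eq_vecI) (auto simp: index_vkron)

section \<open>Inverses and integer powers\<close>

lemma inv_mat_inverse:
  fixes A :: "'a::comm_semiring_1 mat"
  assumes A: "A \<in> carrier_mat n n" and inv: "invertible_mat A"
  shows "inv_mat A \<in> carrier_mat n n" "A * inv_mat A = 1\<^sub>m n" "inv_mat A * A = 1\<^sub>m n"
proof -
  obtain B where AB: "inverts_mat A B" and BA: "inverts_mat B A"
    using inv unfolding invertible_mat_def by blast
  have "B \<in> carrier_mat n n"
    using A AB BA unfolding inverts_mat_def
    by (metis carrier_matD carrier_matI index_mult_mat(2,3) index_one_mat(2,3))
  then have "\<exists>B. B \<in> carrier_mat (dim_row A) (dim_row A) \<and> inverts_mat A B \<and> inverts_mat B A"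
    using A AB BA by auto
  from someI_ex[OF this]
  have "inv_mat A \<in> carrier_mat n n \<and> inverts_mat A (inv_mat A) \<and> inverts_mat (inv_mat A) A"
    unfolding inv_mat_def using A by auto
  then show "inv_mat A \<in> carrier_mat n n" "A * inv_mat A = 1\<^sub>m n" "inv_mat A * A = 1\<^sub>m n"
    using A unfolding inverts_mat_def by auto
qed

lemma inv_mat_unique:
  fixes A :: "'a::comm_semiring_1 mat"
  assumes A: "A \<in> carrier_mat n n" and B: "B \<in> carrier_mat n n"
    and AB: "A * B = 1\<^sub>m n" and BA: "B * A = 1\<^sub>m n"
  shows "invertible_mat A" "inv_mat A = B"
proof -
  show inv: "invertible_mat A"
    unfolding invertible_mat_def inverts_mat_def
    using A B AB BA by (auto simp: square_mat.simps intro!: exI[of _ B])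
  note A' = inv_mat_inverse[OF A inv]
  have "inv_mat A = inv_mat A * (A * B)" using A'(1) by (simp add: AB)
  also have "\<dots> = (inv_mat A * A) * B" using A' A B by (intro assoc_mult_mat[symmetric]) auto
  finally show "inv_mat A = B" using A' B by simp
qed

lemma pow_mat_add: "A \<in> carrier_mat n n \<Longrightarrow> A ^\<^sub>m (a + b) = A ^\<^sub>m a * A ^\<^sub>m b"
proof (induction b)
  case (Suc b)
  then have "A ^\<^sub>m (a + Suc b) = A ^\<^sub>m a * A ^\<^sub>m b * A" by simp
  also have "\<dots> = A ^\<^sub>m a * (A ^\<^sub>m b * A)" using Suc.prems by (intro assoc_mult_mat) auto
  finally show ?case by simp
qed simp

lemma one_pow_mat: "(1\<^sub>m n :: 'a::semiring_1 mat) ^\<^sub>m k = 1\<^sub>m n"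
  by (induction k) auto

text \<open>Integer powers of A computed with a given inverse B, avoiding the choice in inv_mat.\<close>

definition zpow_mat :: "'a::semiring_1 mat \<Rightarrow> 'a mat \<Rightarrow> int \<Rightarrow> 'a mat" where
  "zpow_mat A B k = (if 0 \<le> k then A ^\<^sub>m nat k else B ^\<^sub>m nat (- k))"

lemma zpow_mat_carrier:
  "A \<in> carrier_mat n n \<Longrightarrow> B \<in> carrier_mat n n \<Longrightarrow> zpow_mat A B k \<in> carrier_mat n n"
  by (simp add: zpow_mat_def)

lemma pow_mat_mult_pow_mat_inverse:
  assumes A: "A \<in> carrier_mat n n" and B: "B \<in> carrier_mat n n" and AB: "A * B = 1\<^sub>m n"
  shows "A ^\<^sub>m a * B ^\<^sub>m b = zpow_mat A B (int a - int b)"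
proof (induction a arbitrary: b)
  case 0
  then show ?case using A B by (cases b) (auto simp: zpow_mat_def nat_add_distrib)
next
  case (Suc a)
  show ?case
  proof (cases b)
    case 0
    then show ?thesis using A B by (simp add: zpow_mat_def nat_add_distrib)
  next
    case (Suc b')
    have "A ^\<^sub>m Suc a * B ^\<^sub>m b = A ^\<^sub>m a * ((A * B) * B ^\<^sub>m b')"
      using A B Suc pow_mat_add[OF B, of 1 b']
      by (simp add: assoc_mult_mat[of _ n n _ n _ n] mult_carrier_mat[of _ n n _ n])
    also have "\<dots> = zpow_mat A B (int a - int b')" using AB B Suc.IH by simp
    finally show ?thesis using Suc by simp
  qed
qed

lemma zpow_mat_add:
  assumes A: "A \<in> carrier_mat n n" and B: "B \<in> carrier_mat n n"
    and AB: "A * B = 1\<^sub>m n" and BA: "B * A = 1\<^sub>m n"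
  shows "zpow_mat A B (k + l) = zpow_mat A B k * zpow_mat A B l"
proof -
  define a1 a2 b1 b2 where "a1 = nat k" "a2 = nat l" "b1 = nat (-k)" "b2 = nat (-l)"
  have split: "zpow_mat A B k = A ^\<^sub>m a1 * B ^\<^sub>m b1" "zpow_mat A B l = A ^\<^sub>m a2 * B ^\<^sub>m b2"
    using A B by (auto simp: zpow_mat_def a1_a2_b1_b2_def)
  have "B ^\<^sub>m b1 * A ^\<^sub>m a2 = zpow_mat B A (int b1 - int a2)"
    by (rule pow_mat_mult_pow_mat_inverse[OF B A BA])
  also have "\<dots> = zpow_mat A B (int a2 - int b1)"
    using A B by (auto simp: zpow_mat_def)
  also have "\<dots> = A ^\<^sub>m a2 * B ^\<^sub>m b1"
    by (rule pow_mat_mult_pow_mat_inverse[OF A B AB, symmetric])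
  finally have comm: "B ^\<^sub>m b1 * A ^\<^sub>m a2 = A ^\<^sub>m a2 * B ^\<^sub>m b1" .
  have "zpow_mat A B k * zpow_mat A B l = A ^\<^sub>m a1 * ((B ^\<^sub>m b1 * A ^\<^sub>m a2) * B ^\<^sub>m b2)"
    using A B by (simp add: split assoc_mult_mat[of _ n n _ n _ n] mult_carrier_mat[of _ n n _ n])
  also have "\<dots> = (A ^\<^sub>m a1 * A ^\<^sub>m a2) * (B ^\<^sub>m b1 * B ^\<^sub>m b2)"
    using A B by (simp add: comm assoc_mult_mat[of _ n n _ n _ n] mult_carrier_mat[of _ n n _ n])
  also have "\<dots> = zpow_mat A B (int (a1 + a2) - int (b1 + b2))"
    using A B by (simp add: pow_mat_add[symmetric] pow_mat_mult_pow_mat_inverse[OF A B AB])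
  also have "int (a1 + a2) - int (b1 + b2) = k + l" by (simp add: a1_a2_b1_b2_def)
  finally show ?thesis ..
qed

locale invertible_square_mat =
  fixes A :: "'a::comm_semiring_1 mat" and n :: nat
  assumes carrier: "A \<in> carrier_mat n n" and invertible: "invertible_mat A"
begin

lemmas inv_mat = inv_mat_inverse[OF carrier invertible]

lemma inv_mat_cancel_vec:
  assumes v: "v \<in> carrier_vec n"
  shows "A *\<^sub>v (inv_mat A *\<^sub>v v) = v" "inv_mat A *\<^sub>v (A *\<^sub>v v) = v"
proof -
  have "A *\<^sub>v (inv_mat A *\<^sub>v v) = (A * inv_mat A) *\<^sub>v v"
    by (rule assoc_mult_mat_vec[symmetric, OF carrier inv_mat(1) v])
  then show "A *\<^sub>v (inv_mat A *\<^sub>v v) = v" using v by (simp add: inv_mat(2))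
  have "inv_mat A *\<^sub>v (A *\<^sub>v v) = (inv_mat A * A) *\<^sub>v v"
    by (rule assoc_mult_mat_vec[symmetric, OF inv_mat(1) carrier v])
  then show "inv_mat A *\<^sub>v (A *\<^sub>v v) = v" using v by (simp add: inv_mat(3))
qed

lemma mpow_int_eq_zpow_mat: "mpow_int A k = zpow_mat A (inv_mat A) k"
  by (simp add: mpow_int_def zpow_mat_def)

lemma mpow_int_carrier: "mpow_int A k \<in> carrier_mat n n"
  unfolding mpow_int_eq_zpow_mat by (rule zpow_mat_carrier[OF carrier inv_mat(1)])

lemma mpow_int_add: "mpow_int A (k + l) = mpow_int A k * mpow_int A l"
  unfolding mpow_int_eq_zpow_mat by (rule zpow_mat_add[OF carrier inv_mat])

lemma mpow_int_0: "mpow_int A 0 = 1\<^sub>m n"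
  using carrier by (simp add: mpow_int_def)

lemma mpow_int_1: "mpow_int A 1 = A"
  using carrier by (simp add: mpow_int_def)

lemma mpow_int_uminus:
  "invertible_mat (mpow_int A k)" "inv_mat (mpow_int A k) = mpow_int A (- k)"
  using inv_mat_unique[of "mpow_int A k" n "mpow_int A (- k)"]
  by (simp_all add: mpow_int_carrier mpow_int_add[symmetric] mpow_int_0)

lemma mpow_int_mult_vec:
  "v \<in> carrier_vec n \<Longrightarrow> mpow_int A k *\<^sub>v (mpow_int A l *\<^sub>v v) = mpow_int A (k + l) *\<^sub>v v"
  by (simp add: mpow_int_carrier mpow_int_add assoc_mult_mat_vec[of _ n n _ n])

lemma mpow_int_cancel_vec: "v \<in> carrier_vec n \<Longrightarrow> mpow_int A k *\<^sub>v (mpow_int A (- k) *\<^sub>v v) = v"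
  by (simp add: mpow_int_mult_vec mpow_int_0)

end

lemma kron_pow_mat:
  fixes X :: "'a::comm_semiring_1 mat"
  assumes X: "X \<in> carrier_mat n n" and Y: "Y \<in> carrier_mat m m"
  shows "kron X Y ^\<^sub>m a = kron (X ^\<^sub>m a) (Y ^\<^sub>m a)"
  by (induction a) (use X Y in \<open>simp_all add: kron_one_mat kron_mult[of _ n n _ n _ m m _ m]\<close>)

lemma inv_mat_kron:
  fixes X :: "'a::comm_semiring_1 mat"
  assumes "invertible_square_mat X n" and "invertible_square_mat Y m"
  shows "invertible_mat (kron X Y)" "inv_mat (kron X Y) = kron (inv_mat X) (inv_mat Y)"
proof -
  interpret X: invertible_square_mat X n by fact
  interpret Y: invertible_square_mat Y m by fact
  show "invertible_mat (kron X Y)" "inv_mat (kron X Y) = kron (inv_mat X) (inv_mat Y)"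
    using inv_mat_unique[of "kron X Y" "n*m" "kron (inv_mat X) (inv_mat Y)"] X.carrier Y.carrier X.inv_mat Y.inv_mat
    by (simp_all add: kron_mult[of _ n n _ n _ m m _ m] kron_one_mat)
qed

lemma mpow_int_kron:
  fixes X :: "'a::comm_semiring_1 mat"
  assumes X: "invertible_square_mat X n" and Y: "invertible_square_mat Y m"
  shows "mpow_int (kron X Y) k = kron (mpow_int X k) (mpow_int Y k)"
  using X Y inv_mat_kron[OF X Y] invertible_square_mat.inv_mat[OF X] invertible_square_mat.inv_mat[OF Y]
  by (auto simp: mpow_int_def kron_pow_mat invertible_square_mat_def)

lemma mpow_int_one_mat: "mpow_int (1\<^sub>m n :: 'a::comm_semiring_1 mat) k = 1\<^sub>m n"
proof -
  have "inv_mat (1\<^sub>m n :: 'a mat) = 1\<^sub>m n" by (rule inv_mat_unique(2)) auto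
  then show ?thesis by (simp add: mpow_int_def one_pow_mat)
qed

section \<open>The coherence map H2 on elementary tensors\<close>

lemma mult_mat_vec_unit_vec_index:
  fixes A :: "'a::semiring_1 mat"
  shows "A \<in> carrier_mat r c \<Longrightarrow> k < c \<Longrightarrow> u < r \<Longrightarrow> (A *\<^sub>v unit_vec c k) $ u = A $$ (u, k)"
  by (simp add: row_def)

lemma mult_mat_vec_vkron_index:
  fixes N :: "'a::comm_semiring_1 mat"
  assumes N: "N \<in> carrier_mat r (k*l)" and a: "a \<in> carrier_vec k" and b: "b \<in> carrier_vec l"
    and u: "u < r"
  shows "(N *\<^sub>v vkron a b) $ u = (\<Sum>s\<in>{0..<k}. \<Sum>t\<in>{0..<l}. N $$ (u, s*l+t) * a $ s * b $ t)"
proof -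
  have "(N *\<^sub>v vkron a b) $ u = (\<Sum>c\<in>{0..<k*l}. N $$ (u,c) * vkron a b $ c)"
    using N a b u by (simp add: scalar_prod_def)
  also have "\<dots> = (\<Sum>s\<in>{0..<k}. \<Sum>t\<in>{0..<l}. N $$ (u, s*l+t) * vkron a b $ (s*l+t))"
    by (rule sum_upt_mult_split)
  also have "\<dots> = (\<Sum>s\<in>{0..<k}. \<Sum>t\<in>{0..<l}. N $$ (u, s*l+t) * a $ s * b $ t)"
    by (intro sum.cong refl) (use a b in \<open>auto simp: index_vkron_mult_add mult.assoc\<close>)
  finally show ?thesis .
qed

lemma hmul_mult_mat_vec:
  fixes mH :: "'a::field_char_0 mat"
  assumes "mH \<in> carrier_mat r (d*d)" "P \<in> carrier_mat d d" "Q \<in> carrier_mat d d"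
    and "a \<in> carrier_vec d" "b \<in> carrier_vec d"
  shows "hmul mH (P *\<^sub>v a) (Q *\<^sub>v b) = (mH * kron P Q) *\<^sub>v vkron a b"
  using assms by (simp add: hmul_def kron_mult_vkron[of P d d Q d d] assoc_mult_mat_vec[of _ r "d*d" _ "d*d"])

lemma sum4_delta:
  fixes f :: "nat \<Rightarrow> nat \<Rightarrow> nat \<Rightarrow> nat \<Rightarrow> 'a::comm_semiring_1"
  assumes "p < n" "q < m"
  shows "(\<Sum>p'\<in>{0..<n}. \<Sum>s\<in>{0..<d}. \<Sum>q'\<in>{0..<m}. \<Sum>t\<in>{0..<d}.
      (if p = p' \<and> q = q' then M s t else 0) * f p' s q' t)
    = (\<Sum>s\<in>{0..<d}. \<Sum>t\<in>{0..<d}. M s t * f p s q t)"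
proof -
  have "(if p = p' \<and> q = q' then M s t else 0) * f p' s q' t
      = of_bool (p' = p) * (of_bool (q' = q) * (M s t * f p s q t))" for p' s q' t
    by auto
  then show ?thesis
    using assms by (simp add: sum_distrib_left[symmetric] sum_distrib_right[symmetric])
qed

lemma dim_H2 [simp]:
  "dim_row (H2 i j aH mH X Y) = (dim_row X * dim_row Y) * dim_row aH"
  "dim_col (H2 i j aH mH X Y) = (dim_row X * dim_row aH) * (dim_row Y * dim_row aH)"
  by (simp_all add: H2_def Let_def)

lemma H2_index:
  assumes d: "d = dim_row aH" and m: "m = dim_row Y"
    and p: "p < dim_row X" and q: "q < m" and u: "u < d"
    and p': "p' < dim_row X" and s: "s < d" and q': "q' < m" and t: "t < d"
  shows "H2 i j aH mH X Y $$ ((p*m+q)*d+u, (p'*d+s)*(m*d) + (q'*d+t)) =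
    (if p = p' \<and> q = q'
     then hmul mH (mpow_int aH i *\<^sub>v unit_vec d s) (mpow_int aH j *\<^sub>v unit_vec d t) $ u else 0)"
proof -
  have "(p*m+q)*d+u < (dim_row X * m)*d" using p q u by (intro mult_add_less_mult)
  moreover have "(p'*d+s)*(m*d) + (q'*d+t) < (dim_row X * d)*(m*d)"
    using p' s q' t by (intro mult_add_less_mult)
  moreover have "q'*d+t < m*d" using q' t by (rule mult_add_less_mult)
  ultimately show ?thesis
    using q u s t unfolding H2_def Let_def d[symmetric] m[symmetric] by simp
qed

lemma H2_mult_vkron:
  fixes aH :: "'a::field_char_0 mat"
  assumes d: "d = dim_row aH"
    and Ai: "mpow_int aH i \<in> carrier_mat d d" and Aj: "mpow_int aH j \<in> carrier_mat d d"
    and mH: "mH \<in> carrier_mat d (d*d)"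
    and x: "x \<in> carrier_vec (dim_row X)" and a: "a \<in> carrier_vec d"
    and y: "y \<in> carrier_vec (dim_row Y)" and b: "b \<in> carrier_vec d"
  shows "H2 i j aH mH X Y *\<^sub>v vkron (vkron x a) (vkron y b)
    = vkron (vkron x y) (hmul mH (mpow_int aH i *\<^sub>v a) (mpow_int aH j *\<^sub>v b))"
proof (rule eq_vecI)
  let ?n = "dim_row X" and ?m = "dim_row Y"
  let ?H = "H2 i j aH mH X Y" and ?v = "vkron (vkron x a) (vkron y b)"
  let ?N = "mH * kron (mpow_int aH i) (mpow_int aH j)"
  have N: "?N \<in> carrier_mat d (d*d)" using mH Ai Aj by simp
  fix r assume "r < dim_vec (vkron (vkron x y) (hmul mH (mpow_int aH i *\<^sub>v a) (mpow_int aH j *\<^sub>v b)))"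
  then have r: "r < (?n*?m)*d" using x y mH by (simp add: hmul_def)
  define p q u where "p = r div d div ?m" "q = r div d mod ?m" "u = r mod d"
  have r_eq: "r = (p*?m+q)*d+u" by (simp add: p_q_u_def)
  have rd: "r div d < ?n * ?m" using r by (simp add: less_mult_imp_div_less)
  have p: "p < ?n" and q: "q < ?m" and u: "u < d"
    unfolding p_q_u_def using less_mult_imp_div_less[OF rd] mod_less_of_less_mult[OF rd] r
    by (auto simp: mod_less_of_less_mult)
  have M: "hmul mH (mpow_int aH i *\<^sub>v unit_vec d s) (mpow_int aH j *\<^sub>v unit_vec d t) $ u = ?N $$ (u, s*d+t)"
    if "s < d" "t < d" for s t
    using that u N mH Ai Aj
    by (simp add: hmul_mult_mat_vec[of _ d] vkron_unit_vec mult_mat_vec_unit_vec_index mult_add_less_mult)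
  have "(?H *\<^sub>v ?v) $ r = (\<Sum>c1\<in>{0..<?n*d}. \<Sum>c2\<in>{0..<?m*d}. ?H $$ (r, c1*(?m*d)+c2) * ?v $ (c1*(?m*d)+c2))"
    using r x y a b d by (simp add: scalar_prod_def sum_upt_mult_split)
  also have "\<dots> = (\<Sum>p'\<in>{0..<?n}. \<Sum>s\<in>{0..<d}. \<Sum>q'\<in>{0..<?m}. \<Sum>t\<in>{0..<d}.
      (if p = p' \<and> q = q' then ?N $$ (u, s*d+t) else 0) * ((x $ p' * a $ s) * (y $ q' * b $ t)))"
    unfolding sum_upt_mult_split
  proof (intro sum.cong refl)
    fix p' s q' t assume "p' \<in> {0..<?n}" "s \<in> {0..<d}" "q' \<in> {0..<?m}" "t \<in> {0..<d}"
    then have p': "p' < ?n" and s: "s < d" and q': "q' < ?m" and t: "t < d" by auto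
    have "?v $ ((p'*d+s)*(?m*d)+(q'*d+t)) = (x $ p' * a $ s) * (y $ q' * b $ t)"
      using index_vkron_mult_add[OF vkron_carrier_vec[OF x a] vkron_carrier_vec[OF y b]]
        index_vkron_mult_add[OF x a p' s] index_vkron_mult_add[OF y b q' t] p' s q' t
      by (simp add: mult_add_less_mult)
    then show "?H $$ (r, (p'*d+s)*(?m*d)+(q'*d+t)) * ?v $ ((p'*d+s)*(?m*d)+(q'*d+t))
      = (if p = p' \<and> q = q' then ?N $$ (u, s*d+t) else 0) * ((x $ p' * a $ s) * (y $ q' * b $ t))"
      by (simp add: r_eq H2_index[OF d refl p q u p' s q' t] M[OF s t])
  qed
  also have "\<dots> = x $ p * y $ q * (\<Sum>s\<in>{0..<d}. \<Sum>t\<in>{0..<d}. ?N $$ (u, s*d+t) * a $ s * b $ t)"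
    unfolding sum4_delta[OF p q] by (simp add: sum_distrib_left mult_ac)
  also have "\<dots> = x $ p * y $ q * (?N *\<^sub>v vkron a b) $ u"
    by (simp only: mult_mat_vec_vkron_index[OF N a b u])
  also have "\<dots> = vkron (vkron x y) (?N *\<^sub>v vkron a b) $ r"
    using index_vkron_mult_add[OF vkron_carrier_vec[OF x y] mult_mat_vec_carrier[OF N vkron_carrier_vec[OF a b]]
        mult_add_less_mult[OF p q] u]
      index_vkron_mult_add[OF x y p q]
    by (simp add: r_eq)
  also have "?N *\<^sub>v vkron a b = hmul mH (mpow_int aH i *\<^sub>v a) (mpow_int aH j *\<^sub>v b)"
    by (rule hmul_mult_mat_vec[OF mH Ai Aj a b, symmetric])
  finally show "(?H *\<^sub>v ?v) $ r = vkron (vkron x y) (hmul mH (mpow_int aH i *\<^sub>v a) (mpow_int aH j *\<^sub>v b)) $ r" .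
qed (use x y mH d in \<open>simp add: hmul_def\<close>)

lemma hmul_carrier_vec: "mH \<in> carrier_mat d (d*d) \<Longrightarrow> hmul mH u v \<in> carrier_vec d"
  by (simp add: hmul_def carrier_vecI)

lemma pow_mat_hmul:
  fixes P :: "'a::field_char_0 mat"
  assumes P: "P \<in> carrier_mat d d" and mH: "mH \<in> carrier_mat d (d*d)"
    and hom: "\<And>u v. u \<in> carrier_vec d \<Longrightarrow> v \<in> carrier_vec d \<Longrightarrow>
      P *\<^sub>v hmul mH u v = hmul mH (P *\<^sub>v u) (P *\<^sub>v v)"
    and u: "u \<in> carrier_vec d" and v: "v \<in> carrier_vec d"
  shows "P ^\<^sub>m k *\<^sub>v hmul mH u v = hmul mH (P ^\<^sub>m k *\<^sub>v u) (P ^\<^sub>m k *\<^sub>v v)"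
  using u v
proof (induction k arbitrary: u v)
  case 0
  then show ?case using P hmul_carrier_vec[OF mH] by simp
next
  case (Suc k)
  have "P ^\<^sub>m Suc k *\<^sub>v hmul mH u v = P ^\<^sub>m k *\<^sub>v hmul mH (P *\<^sub>v u) (P *\<^sub>v v)"
    using P mH Suc.prems hmul_carrier_vec[OF mH] by (simp add: hom assoc_mult_mat_vec[of _ d d _ d])
  also have "\<dots> = hmul mH (P ^\<^sub>m Suc k *\<^sub>v u) (P ^\<^sub>m Suc k *\<^sub>v v)"
    using P Suc by (simp add: assoc_mult_mat_vec[of _ d d _ d])
  finally show ?case .
qed

lemma pow_mat_fixed_vec:
  "P \<in> carrier_mat d d \<Longrightarrow> h \<in> carrier_vec d \<Longrightarrow> P *\<^sub>v h = h \<Longrightarrow> P ^\<^sub>m k *\<^sub>v h = h"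
  by (induction k) (simp_all add: assoc_mult_mat_vec[of _ d d _ d])

lemma vec_1_one: "vec 1 (\<lambda>_. 1) = (unit_vec 1 0 :: 'a::semiring_1 vec)"
  by (rule eq_vecI) auto

lemma is_objD: "is_obj X \<Longrightarrow> X \<in> carrier_mat (dim_row X) (dim_row X)"
  unfolding is_obj_def by blast

lemma is_obj_invertible_square_mat: "is_obj X \<Longrightarrow> invertible_square_mat X (dim_row X)"
  by (simp add: is_obj_def invertible_square_mat_def)

lemma mpow_int_obj_carrier: "is_obj X \<Longrightarrow> mpow_int X k \<in> carrier_mat (dim_row X) (dim_row X)"
  by (rule invertible_square_mat.mpow_int_carrier[OF is_obj_invertible_square_mat])

lemma is_obj_unit_obj: "is_obj (unit_obj :: 'a::field_char_0 mat)"
  using inv_mat_unique(1)[of "1\<^sub>m 1 :: 'a mat" 1 "1\<^sub>m 1"] by (simp add: is_obj_def unit_obj_def)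

lemma mpow_int_unit_obj: "mpow_int unit_obj k = (1\<^sub>m 1 :: 'a::field_char_0 mat)"
  by (simp add: unit_obj_def mpow_int_one_mat)

locale hom_algebra_data =
  fixes i j :: int and aH mH etaH :: "'a::field_char_0 mat"
  assumes obj: "is_obj aH" and mor_m: "is_mor (kron aH aH) aH mH" and mor_e: "is_mor unit_obj aH etaH"
begin

abbreviation d :: nat where "d \<equiv> dim_row aH"

abbreviation al :: "int \<Rightarrow> 'a mat" where "al k \<equiv> mpow_int aH k"

sublocale invertible_square_mat aH d
  by (rule is_obj_invertible_square_mat[OF obj])

lemma mH_carrier: "mH \<in> carrier_mat d (d*d)" and mH_commute: "mH * kron aH aH = aH * mH"
  using mor_m unfolding is_mor_def by auto

lemma etaH_carrier: "etaH \<in> carrier_mat d 1" and aH_etaH: "aH * etaH = etaH"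
  using mor_e unfolding is_mor_def unit_obj_def by auto

lemma hmul_carrier [simp]: "hmul mH u v \<in> carrier_vec d"
  by (rule hmul_carrier_vec[OF mH_carrier])

lemma al_mult_vec_carrier [simp]: "v \<in> carrier_vec d \<Longrightarrow> al k *\<^sub>v v \<in> carrier_vec d"
  by (rule mult_mat_vec_carrier[OF mpow_int_carrier])

lemma hone_carrier [simp]: "hone etaH \<in> carrier_vec d"
  using etaH_carrier by (simp add: hone_def)

lemma aH_hmul:
  assumes "u \<in> carrier_vec d" "v \<in> carrier_vec d"
  shows "aH *\<^sub>v hmul mH u v = hmul mH (aH *\<^sub>v u) (aH *\<^sub>v v)"
proof -
  have "aH *\<^sub>v hmul mH u v = (aH * mH) *\<^sub>v vkron u v"
    unfolding hmul_def by (rule assoc_mult_mat_vec[symmetric, OF carrier mH_carrier]) (use assms in simp)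
  also have "\<dots> = (mH * kron aH aH) *\<^sub>v vkron u v"
    by (simp add: mH_commute)
  also have "\<dots> = hmul mH (aH *\<^sub>v u) (aH *\<^sub>v v)"
    by (rule hmul_mult_mat_vec[OF mH_carrier carrier carrier assms, symmetric])
  finally show ?thesis .
qed

lemma inv_mat_hmul:
  assumes u: "u \<in> carrier_vec d" and v: "v \<in> carrier_vec d"
  shows "inv_mat aH *\<^sub>v hmul mH u v = hmul mH (inv_mat aH *\<^sub>v u) (inv_mat aH *\<^sub>v v)"
proof -
  have u': "inv_mat aH *\<^sub>v u \<in> carrier_vec d" and v': "inv_mat aH *\<^sub>v v \<in> carrier_vec d"
    using u v inv_mat(1) by auto
  have "inv_mat aH *\<^sub>v hmul mH u v = inv_mat aH *\<^sub>v (aH *\<^sub>v hmul mH (inv_mat aH *\<^sub>v u) (inv_mat aH *\<^sub>v v))"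
    by (simp only: aH_hmul[OF u' v'] inv_mat_cancel_vec(1)[OF u] inv_mat_cancel_vec(1)[OF v])
  also have "\<dots> = hmul mH (inv_mat aH *\<^sub>v u) (inv_mat aH *\<^sub>v v)"
    by (rule inv_mat_cancel_vec(2)) simp
  finally show ?thesis .
qed

lemma al_hmul:
  "u \<in> carrier_vec d \<Longrightarrow> v \<in> carrier_vec d \<Longrightarrow> al k *\<^sub>v hmul mH u v = hmul mH (al k *\<^sub>v u) (al k *\<^sub>v v)"
  unfolding mpow_int_def
  using pow_mat_hmul[OF carrier mH_carrier aH_hmul] pow_mat_hmul[OF inv_mat(1) mH_carrier inv_mat_hmul]
  by simp

lemma aH_hone: "aH *\<^sub>v hone etaH = hone etaH"
proof -
  have "aH *\<^sub>v hone etaH = (aH * etaH) *\<^sub>v vec 1 (\<lambda>_. 1)"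
    unfolding hone_def by (rule assoc_mult_mat_vec[symmetric, OF carrier etaH_carrier]) simp
  then show ?thesis by (simp add: aH_etaH hone_def)
qed

lemma al_hone: "al k *\<^sub>v hone etaH = hone etaH"
proof -
  have "inv_mat aH *\<^sub>v hone etaH = hone etaH"
    using inv_mat_cancel_vec(2)[OF hone_carrier] by (simp only: aH_hone)
  then show ?thesis
    unfolding mpow_int_def
    using pow_mat_fixed_vec[OF carrier hone_carrier aH_hone] pow_mat_fixed_vec[OF inv_mat(1) hone_carrier]
    by simp
qed

lemma al_al: "v \<in> carrier_vec d \<Longrightarrow> al k *\<^sub>v (al l *\<^sub>v v) = al (k + l) *\<^sub>v v"
  by (rule mpow_int_mult_vec)

lemma aH_eq_al_1: "aH *\<^sub>v v = al 1 *\<^sub>v v"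
  by (simp add: mpow_int_1)

lemma al_0: "v \<in> carrier_vec d \<Longrightarrow> al 0 *\<^sub>v v = v"
  by (simp add: mpow_int_0)

lemma H2_mult_elementary:
  "x \<in> carrier_vec (dim_row X) \<Longrightarrow> a \<in> carrier_vec d \<Longrightarrow> y \<in> carrier_vec (dim_row Y) \<Longrightarrow> b \<in> carrier_vec d \<Longrightarrow>
   H2 i j aH mH X Y *\<^sub>v vkron (vkron x a) (vkron y b) = vkron (vkron x y) (hmul mH (al i *\<^sub>v a) (al j *\<^sub>v b))"
  by (rule H2_mult_vkron[OF refl mpow_int_carrier mpow_int_carrier mH_carrier])

lemma al_aH_commute: "v \<in> carrier_vec d \<Longrightarrow> al k *\<^sub>v (aH *\<^sub>v v) = aH *\<^sub>v (al k *\<^sub>v v)"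
  by (simp only: aH_eq_al_1 al_al add.commute)

lemma H2_carrier_mat:
  "H2 i j aH mH X Y \<in> carrier_mat ((dim_row X * dim_row Y) * d) ((dim_row X * d) * (dim_row Y * d))"
  by (intro carrier_matI) simp_all

lemma H2_is_mor:
  assumes X: "is_obj X" and Y: "is_obj Y"
  shows "is_mor (kron (Hobj aH X) (Hobj aH Y)) (Hobj aH (kron X Y)) (H2 i j aH mH X Y)"
proof -
  let ?n = "dim_row X" and ?m = "dim_row Y"
  have Xc: "X \<in> carrier_mat ?n ?n" and Yc: "Y \<in> carrier_mat ?m ?m" using X Y by (simp_all add: is_objD)
  let ?H = "H2 i j aH mH X Y" and ?K = "kron (kron X aH) (kron Y aH)" and ?R = "kron (kron X Y) aH"
  have Kc: "?K \<in> carrier_mat ((?n*d)*(?m*d)) ((?n*d)*(?m*d))"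
    using kron_carrier_mat[OF kron_carrier_mat[OF Xc carrier] kron_carrier_mat[OF Yc carrier]] .
  have Rc: "?R \<in> carrier_mat ((?n*?m)*d) ((?n*?m)*d)"
    using kron_carrier_mat[OF kron_carrier_mat[OF Xc Yc] carrier] .
  have "?H * ?K = ?R * ?H"
  proof (rule mat_eq_on_vkron4I[OF mult_carrier_mat[OF H2_carrier_mat Kc] mult_carrier_mat[OF Rc H2_carrier_mat]])
    fix x a y b :: "'a vec"
    assume x: "x \<in> carrier_vec ?n" and a: "a \<in> carrier_vec d" and y: "y \<in> carrier_vec ?m" and b: "b \<in> carrier_vec d"
    have xa: "vkron x a \<in> carrier_vec (?n*d)" and yb: "vkron y b \<in> carrier_vec (?m*d)" using x a y b by auto
    have "(?H * ?K) *\<^sub>v vkron (vkron x a) (vkron y b) = ?H *\<^sub>v (?K *\<^sub>v vkron (vkron x a) (vkron y b))"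
      by (rule assoc_mult_mat_vec[OF H2_carrier_mat Kc vkron_carrier_vec[OF xa yb]])
    also have "?K *\<^sub>v vkron (vkron x a) (vkron y b) = vkron (vkron (X *\<^sub>v x) (aH *\<^sub>v a)) (vkron (Y *\<^sub>v y) (aH *\<^sub>v b))"
      using kron_mult_vkron[OF kron_carrier_mat[OF Xc carrier] kron_carrier_mat[OF Yc carrier] xa yb]
        kron_mult_vkron[OF Xc carrier x a] kron_mult_vkron[OF Yc carrier y b] by simp
    also have "?H *\<^sub>v \<dots> = vkron (vkron (X *\<^sub>v x) (Y *\<^sub>v y)) (hmul mH (al i *\<^sub>v (aH *\<^sub>v a)) (al j *\<^sub>v (aH *\<^sub>v b)))"
      by (rule H2_mult_elementary[OF mult_mat_vec_carrier[OF Xc x] mult_mat_vec_carrier[OF carrier a]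
            mult_mat_vec_carrier[OF Yc y] mult_mat_vec_carrier[OF carrier b]])
    also have "\<dots> = vkron (kron X Y *\<^sub>v vkron x y) (aH *\<^sub>v hmul mH (al i *\<^sub>v a) (al j *\<^sub>v b))"
      by (simp only: kron_mult_vkron[OF Xc Yc x y] aH_hmul[OF al_mult_vec_carrier[OF a] al_mult_vec_carrier[OF b]]
          al_aH_commute[OF a] al_aH_commute[OF b])
    also have "\<dots> = ?R *\<^sub>v (?H *\<^sub>v vkron (vkron x a) (vkron y b))"
      by (simp only: H2_mult_elementary[OF x a y b] kron_mult_vkron[OF kron_carrier_mat[OF Xc Yc] carrier vkron_carrier_vec[OF x y] hmul_carrier])
    also have "\<dots> = (?R * ?H) *\<^sub>v vkron (vkron x a) (vkron y b)"
      by (rule assoc_mult_mat_vec[OF Rc H2_carrier_mat vkron_carrier_vec[OF xa yb], symmetric])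
    finally show "(?H * ?K) *\<^sub>v vkron (vkron x a) (vkron y b) = (?R * ?H) *\<^sub>v vkron (vkron x a) (vkron y b)" .
  qed
  then show ?thesis unfolding is_mor_def Hobj_def using H2_carrier_mat by simp
qed


lemma H0_is_mor: "is_mor unit_obj (Hobj aH unit_obj) (H0 etaH)"
  using mor_e unfolding H0_def Hobj_def unit_obj_def kron_one_1_left .

lemma H2_natural:
  assumes "is_mor X X' f" and "is_mor Y Y' g"
  shows "H2 i j aH mH X' Y' * kron (Hmor aH f) (Hmor aH g) = Hmor aH (kron f g) * H2 i j aH mH X Y"
proof -
  let ?n = "dim_row X" and ?m = "dim_row Y" and ?n' = "dim_row X'" and ?m' = "dim_row Y'"
  have fc: "f \<in> carrier_mat ?n' ?n" and gc: "g \<in> carrier_mat ?m' ?m" using assms unfolding is_mor_def by auto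
  let ?K = "kron (kron f (1\<^sub>m d)) (kron g (1\<^sub>m d))" and ?L = "kron (kron f g) (1\<^sub>m d)"
  let ?H' = "H2 i j aH mH X' Y'" and ?H = "H2 i j aH mH X Y"
  have Kc: "?K \<in> carrier_mat ((?n'*d)*(?m'*d)) ((?n*d)*(?m*d))"
    using kron_carrier_mat[OF kron_carrier_mat[OF fc one_carrier_mat] kron_carrier_mat[OF gc one_carrier_mat]] .
  have Lc: "?L \<in> carrier_mat ((?n'*?m')*d) ((?n*?m)*d)"
    using kron_carrier_mat[OF kron_carrier_mat[OF fc gc] one_carrier_mat] .
  have "?H' * ?K = ?L * ?H"
  proof (rule mat_eq_on_vkron4I[OF mult_carrier_mat[OF H2_carrier_mat Kc] mult_carrier_mat[OF Lc H2_carrier_mat]])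
    fix x a y b :: "'a vec"
    assume x: "x \<in> carrier_vec ?n" and a: "a \<in> carrier_vec d" and y: "y \<in> carrier_vec ?m" and b: "b \<in> carrier_vec d"
    have xayb: "vkron (vkron x a) (vkron y b) \<in> carrier_vec ((?n*d)*(?m*d))"
      using vkron_carrier_vec[OF vkron_carrier_vec[OF x a] vkron_carrier_vec[OF y b]] .
    have "(?H' * ?K) *\<^sub>v vkron (vkron x a) (vkron y b) = ?H' *\<^sub>v (?K *\<^sub>v vkron (vkron x a) (vkron y b))"
      by (rule assoc_mult_mat_vec[OF H2_carrier_mat Kc xayb])
    also have "?K *\<^sub>v vkron (vkron x a) (vkron y b) = vkron (vkron (f *\<^sub>v x) a) (vkron (g *\<^sub>v y) b)"
      by (simp only: kron_mult_vkron[OF kron_carrier_mat[OF fc one_carrier_mat] kron_carrier_mat[OF gc one_carrier_mat]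
            vkron_carrier_vec[OF x a] vkron_carrier_vec[OF y b]] kron_one_mult_vkron[OF fc x a] kron_one_mult_vkron[OF gc y b])
    also have "?H' *\<^sub>v \<dots> = vkron (vkron (f *\<^sub>v x) (g *\<^sub>v y)) (hmul mH (al i *\<^sub>v a) (al j *\<^sub>v b))"
      by (rule H2_mult_elementary[OF mult_mat_vec_carrier[OF fc x] a mult_mat_vec_carrier[OF gc y] b])
    also have "\<dots> = ?L *\<^sub>v (?H *\<^sub>v vkron (vkron x a) (vkron y b))"
      by (simp only: H2_mult_elementary[OF x a y b] kron_one_mult_vkron[OF kron_carrier_mat[OF fc gc] vkron_carrier_vec[OF x y] hmul_carrier]
          kron_mult_vkron[OF fc gc x y])
    also have "\<dots> = (?L * ?H) *\<^sub>v vkron (vkron x a) (vkron y b)"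
      by (rule assoc_mult_mat_vec[OF Lc H2_carrier_mat xayb, symmetric])
    finally show "(?H' * ?K) *\<^sub>v vkron (vkron x a) (vkron y b) = (?L * ?H) *\<^sub>v vkron (vkron x a) (vkron y b)" .
  qed
  then show ?thesis by (simp only: Hmor_def)
qed

lemma dim_Hobj: "dim_row (Hobj aH X) = dim_row X * d"
  by (simp add: Hobj_def)

lemma Hobj_invertible_square_mat:
  assumes X: "is_obj X"
  shows "invertible_square_mat (Hobj aH X) (dim_row X * d)"
  unfolding invertible_square_mat_def Hobj_def
  using kron_carrier_mat[OF is_objD[OF X] carrier]
    inv_mat_kron(1)[OF is_obj_invertible_square_mat[OF X] invertible_square_mat_axioms]
  by blast

lemma mpow_int_Hobj: "is_obj X \<Longrightarrow> mpow_int (Hobj aH X) k = kron (mpow_int X k) (al k)"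
  unfolding Hobj_def by (rule mpow_int_kron[OF is_obj_invertible_square_mat invertible_square_mat_axioms])

lemma inv_mat_mpow_int_Hobj:
  assumes X: "is_obj X"
  shows "inv_mat (mpow_int (Hobj aH X) k) = kron (mpow_int X (- k)) (al (- k))"
  unfolding invertible_square_mat.mpow_int_uminus(2)[OF Hobj_invertible_square_mat[OF X]]
  by (rule mpow_int_Hobj[OF X])

end

section \<open>The coherence axioms on elementary tensors\<close>

context hom_algebra_data
begin

abbreviation hexagon_lhs :: "'a mat \<Rightarrow> 'a mat \<Rightarrow> 'a mat \<Rightarrow> 'a mat" where
  "hexagon_lhs X Y Z \<equiv> H2 i j aH mH X (kron Y Z) * kron (1\<^sub>m (dim_row (Hobj aH X))) (H2 i j aH mH Y Z)
     * assoc_mat i j (Hobj aH X) (Hobj aH Y) (Hobj aH Z)"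

abbreviation hexagon_rhs :: "'a mat \<Rightarrow> 'a mat \<Rightarrow> 'a mat \<Rightarrow> 'a mat" where
  "hexagon_rhs X Y Z \<equiv> Hmor aH (assoc_mat i j X Y Z) * H2 i j aH mH (kron X Y) Z
     * kron (H2 i j aH mH X Y) (1\<^sub>m (dim_row (Hobj aH Z)))"

lemma assoc_mat_Hobj:
  assumes "is_obj X" "is_obj Z"
  shows "assoc_mat i j (Hobj aH X) (Hobj aH Y) (Hobj aH Z)
    = kron (kron (kron (mpow_int X (i+1)) (al (i+1))) (1\<^sub>m (dim_row Y * d))) (kron (mpow_int Z (-j-1)) (al (-j-1)))"
  unfolding assoc_mat_def mpow_int_Hobj[OF assms(1)] mpow_int_Hobj[OF assms(2)] dim_Hobj ..

lemma hexagon_lhs_mult_vkron: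
  assumes X: "is_obj X" and Y: "is_obj Y" and Z: "is_obj Z"
    and x: "x \<in> carrier_vec (dim_row X)" and y: "y \<in> carrier_vec (dim_row Y)" and z: "z \<in> carrier_vec (dim_row Z)"
    and a: "a \<in> carrier_vec d" and b: "b \<in> carrier_vec d" and c: "c \<in> carrier_vec d"
  shows "hexagon_lhs X Y Z *\<^sub>v vkron (vkron (vkron x a) (vkron y b)) (vkron z c)
    = vkron (vkron (mpow_int X (i+1) *\<^sub>v x) (vkron y (mpow_int Z (-j-1) *\<^sub>v z)))
        (hmul mH (al i *\<^sub>v (al (i+1) *\<^sub>v a)) (al j *\<^sub>v hmul mH (al i *\<^sub>v b) (al j *\<^sub>v (al (-j-1) *\<^sub>v c))))"
proof -
  let ?n = "dim_row X" and ?m = "dim_row Y" and ?l = "dim_row Z"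
  let ?X1 = "mpow_int X (i+1)" and ?Z1 = "mpow_int Z (-j-1)"
  have X1: "?X1 \<in> carrier_mat ?n ?n" and Z1: "?Z1 \<in> carrier_mat ?l ?l"
    using mpow_int_obj_carrier X Z by auto
  let ?A = "assoc_mat i j (Hobj aH X) (Hobj aH Y) (Hobj aH Z)"
  let ?N = "(?n*d)*((?m*d)*(?l*d))"
  have NN: "((?n*d)*(?m*d))*(?l*d) = ?N" by (simp add: mult.assoc)
  have "?A \<in> carrier_mat (((?n*d)*(?m*d))*(?l*d)) (((?n*d)*(?m*d))*(?l*d))"
    unfolding assoc_mat_Hobj[OF X Z]
    by (rule kron_carrier_mat[OF kron_carrier_mat[OF kron_carrier_mat[OF X1 mpow_int_carrier] one_carrier_mat]
        kron_carrier_mat[OF Z1 mpow_int_carrier]])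
  then have Ac: "?A \<in> carrier_mat ?N ?N" unfolding NN .
  let ?K = "kron (1\<^sub>m (dim_row (Hobj aH X))) (H2 i j aH mH Y Z)"
  have Kc: "?K \<in> carrier_mat ((?n*d)*((?m*?l)*d)) ?N"
    unfolding dim_Hobj using kron_carrier_mat[OF one_carrier_mat H2_carrier_mat] .
  let ?H = "H2 i j aH mH X (kron Y Z)"
  have Hc: "?H \<in> carrier_mat ((?n*(?m*?l))*d) ((?n*d)*((?m*?l)*d))"
    using H2_carrier_mat[of X "kron Y Z"] by (simp only: dim_kron)
  have xa: "vkron x a \<in> carrier_vec (?n*d)" and yb: "vkron y b \<in> carrier_vec (?m*d)"
    and zc: "vkron z c \<in> carrier_vec (?l*d)"
    using x a y b z c by simp_all
  let ?T = "vkron (vkron (vkron x a) (vkron y b)) (vkron z c)"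
  have T: "?T \<in> carrier_vec ?N"
    using vkron_carrier_vec[OF vkron_carrier_vec[OF xa yb] zc] unfolding NN .
  let ?x1 = "?X1 *\<^sub>v x" and ?z1 = "?Z1 *\<^sub>v z" and ?a1 = "al (i+1) *\<^sub>v a" and ?c1 = "al (-j-1) *\<^sub>v c"
  have x1: "?x1 \<in> carrier_vec ?n" and z1: "?z1 \<in> carrier_vec ?l"
    using mult_mat_vec_carrier[OF X1 x] mult_mat_vec_carrier[OF Z1 z] .
  have a1: "?a1 \<in> carrier_vec d" and c1: "?c1 \<in> carrier_vec d"
    using al_mult_vec_carrier[OF a] al_mult_vec_carrier[OF c] .
  have "hexagon_lhs X Y Z *\<^sub>v ?T = (?H * ?K) *\<^sub>v (?A *\<^sub>v ?T)"
    by (rule assoc_mult_mat_vec[OF mult_carrier_mat[OF Hc Kc] Ac T])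
  also have "?A *\<^sub>v ?T = vkron (vkron (vkron ?x1 ?a1) (vkron y b)) (vkron ?z1 ?c1)"
    unfolding assoc_mat_Hobj[OF X Z]
    by (simp only: kron_mult_vkron[OF kron_carrier_mat[OF kron_carrier_mat[OF X1 mpow_int_carrier] one_carrier_mat]
          kron_carrier_mat[OF Z1 mpow_int_carrier] vkron_carrier_vec[OF xa yb] zc]
        kron_mult_vkron[OF kron_carrier_mat[OF X1 mpow_int_carrier] one_carrier_mat xa yb]
        kron_mult_vkron[OF X1 mpow_int_carrier x a] kron_mult_vkron[OF Z1 mpow_int_carrier z c]
        one_mult_mat_vec[OF yb])
  also have "\<dots> = vkron (vkron ?x1 ?a1) (vkron (vkron y b) (vkron ?z1 ?c1))"
    by (rule vkron_assoc)
  also have "(?H * ?K) *\<^sub>v \<dots> = ?H *\<^sub>v (?K *\<^sub>v vkron (vkron ?x1 ?a1) (vkron (vkron y b) (vkron ?z1 ?c1)))"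
    by (rule assoc_mult_mat_vec[OF Hc Kc])
      (use vkron_carrier_vec[OF vkron_carrier_vec[OF x1 a1] vkron_carrier_vec[OF yb vkron_carrier_vec[OF z1 c1]]]
       in \<open>simp only: mult.assoc\<close>)
  also have "?K *\<^sub>v vkron (vkron ?x1 ?a1) (vkron (vkron y b) (vkron ?z1 ?c1))
      = vkron (vkron ?x1 ?a1) (vkron (vkron y ?z1) (hmul mH (al i *\<^sub>v b) (al j *\<^sub>v ?c1)))"
    unfolding dim_Hobj
    by (simp only: kron_mult_vkron[OF one_carrier_mat H2_carrier_mat vkron_carrier_vec[OF x1 a1]
          vkron_carrier_vec[OF yb vkron_carrier_vec[OF z1 c1]]]
        one_mult_mat_vec[OF vkron_carrier_vec[OF x1 a1]] H2_mult_elementary[OF y b z1 c1])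
  also have "?H *\<^sub>v \<dots> = vkron (vkron ?x1 (vkron y ?z1))
      (hmul mH (al i *\<^sub>v ?a1) (al j *\<^sub>v hmul mH (al i *\<^sub>v b) (al j *\<^sub>v ?c1)))"
    by (rule H2_mult_elementary[OF x1 a1 _ hmul_carrier]) (use vkron_carrier_vec[OF y z1] in simp)
  finally show ?thesis .
qed

lemma hexagon_rhs_mult_vkron:
  assumes X: "is_obj X" and Y: "is_obj Y" and Z: "is_obj Z"
    and x: "x \<in> carrier_vec (dim_row X)" and y: "y \<in> carrier_vec (dim_row Y)" and z: "z \<in> carrier_vec (dim_row Z)"
    and a: "a \<in> carrier_vec d" and b: "b \<in> carrier_vec d" and c: "c \<in> carrier_vec d"
  shows "hexagon_rhs X Y Z *\<^sub>v vkron (vkron (vkron x a) (vkron y b)) (vkron z c)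
    = vkron (vkron (mpow_int X (i+1) *\<^sub>v x) (vkron y (mpow_int Z (-j-1) *\<^sub>v z)))
        (hmul mH (al i *\<^sub>v hmul mH (al i *\<^sub>v a) (al j *\<^sub>v b)) (al j *\<^sub>v c))"
proof -
  let ?n = "dim_row X" and ?m = "dim_row Y" and ?l = "dim_row Z"
  let ?X1 = "mpow_int X (i+1)" and ?Z1 = "mpow_int Z (-j-1)"
  have X1: "?X1 \<in> carrier_mat ?n ?n" and Z1: "?Z1 \<in> carrier_mat ?l ?l"
    using mpow_int_obj_carrier X Z by auto
  let ?R1 = "Hmor aH (assoc_mat i j X Y Z)" and ?R2 = "H2 i j aH mH (kron X Y) Z"
    and ?R3 = "kron (H2 i j aH mH X Y) (1\<^sub>m (dim_row (Hobj aH Z)))"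
  have R1: "?R1 = kron (kron (kron ?X1 (1\<^sub>m ?m)) ?Z1) (1\<^sub>m d)"
    unfolding Hmor_def assoc_mat_def ..
  have X1Z1: "kron (kron ?X1 (1\<^sub>m ?m)) ?Z1 \<in> carrier_mat ((?n*?m)*?l) ((?n*?m)*?l)"
    using kron_carrier_mat[OF kron_carrier_mat[OF X1 one_carrier_mat] Z1] .
  have R1c: "?R1 \<in> carrier_mat (((?n*?m)*?l)*d) (((?n*?m)*?l)*d)"
    unfolding R1 using kron_carrier_mat[OF X1Z1 one_carrier_mat] .
  have R2c: "?R2 \<in> carrier_mat (((?n*?m)*?l)*d) (((?n*?m)*d)*(?l*d))"
    using H2_carrier_mat[of "kron X Y" Z] by (simp only: dim_kron)
  have R3c: "?R3 \<in> carrier_mat (((?n*?m)*d)*(?l*d)) (((?n*d)*(?m*d))*(?l*d))"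
    unfolding dim_Hobj using kron_carrier_mat[OF H2_carrier_mat one_carrier_mat] .
  have xa: "vkron x a \<in> carrier_vec (?n*d)" and yb: "vkron y b \<in> carrier_vec (?m*d)"
    and zc: "vkron z c \<in> carrier_vec (?l*d)" and xy: "vkron x y \<in> carrier_vec (?n*?m)"
    using x a y b z c by simp_all
  let ?T = "vkron (vkron (vkron x a) (vkron y b)) (vkron z c)"
  let ?h = "hmul mH (al i *\<^sub>v a) (al j *\<^sub>v b)"
  have "hexagon_rhs X Y Z *\<^sub>v ?T = (?R1 * ?R2) *\<^sub>v (?R3 *\<^sub>v ?T)"
    by (rule assoc_mult_mat_vec[OF mult_carrier_mat[OF R1c R2c] R3c vkron_carrier_vec[OF vkron_carrier_vec[OF xa yb] zc]])
  also have "?R3 *\<^sub>v ?T = vkron (vkron (vkron x y) ?h) (vkron z c)"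
    unfolding dim_Hobj
    by (simp only: kron_mult_vkron[OF H2_carrier_mat one_carrier_mat vkron_carrier_vec[OF xa yb] zc]
        one_mult_mat_vec[OF zc] H2_mult_elementary[OF x a y b])
  also have "(?R1 * ?R2) *\<^sub>v \<dots> = ?R1 *\<^sub>v (?R2 *\<^sub>v vkron (vkron (vkron x y) ?h) (vkron z c))"
    by (rule assoc_mult_mat_vec[OF R1c R2c vkron_carrier_vec[OF vkron_carrier_vec[OF xy hmul_carrier] zc]])
  also have "?R2 *\<^sub>v vkron (vkron (vkron x y) ?h) (vkron z c)
      = vkron (vkron (vkron x y) z) (hmul mH (al i *\<^sub>v ?h) (al j *\<^sub>v c))"
    by (rule H2_mult_elementary[OF _ hmul_carrier z c]) (use xy in simp)
  also have "?R1 *\<^sub>v \<dots> = vkron (vkron (vkron (?X1 *\<^sub>v x) y) (?Z1 *\<^sub>v z)) (hmul mH (al i *\<^sub>v ?h) (al j *\<^sub>v c))"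
    unfolding R1
    by (simp only: kron_one_mult_vkron[OF X1Z1 vkron_carrier_vec[OF xy z] hmul_carrier]
        kron_mult_vkron[OF kron_carrier_mat[OF X1 one_carrier_mat] Z1 xy z]
        kron_one_mult_vkron[OF X1 x y])
  also have "\<dots> = vkron (vkron (?X1 *\<^sub>v x) (vkron y (?Z1 *\<^sub>v z))) (hmul mH (al i *\<^sub>v ?h) (al j *\<^sub>v c))"
    by (simp only: vkron_assoc)
  finally show ?thesis .
qed

lemma hexagon_carrier:
  fixes X Y Z :: "'a mat"
  assumes X: "is_obj X" and Z: "is_obj Z"
  defines "r \<equiv> ((dim_row X * dim_row Y) * dim_row Z) * d"
    and "c \<equiv> ((dim_row X * d) * (dim_row Y * d)) * (dim_row Z * d)"
  shows "hexagon_lhs X Y Z \<in> carrier_mat r c" "hexagon_rhs X Y Z \<in> carrier_mat r c"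
proof -
  let ?n = "dim_row X" and ?m = "dim_row Y" and ?l = "dim_row Z"
  have X1: "mpow_int X (i+1) \<in> carrier_mat ?n ?n" and Z1: "mpow_int Z (-j-1) \<in> carrier_mat ?l ?l"
    using mpow_int_obj_carrier X Z by auto
  have "assoc_mat i j (Hobj aH X) (Hobj aH Y) (Hobj aH Z) \<in> carrier_mat c c"
    unfolding assoc_mat_Hobj[OF X Z] c_def
    by (rule kron_carrier_mat[OF kron_carrier_mat[OF kron_carrier_mat[OF X1 mpow_int_carrier] one_carrier_mat]
        kron_carrier_mat[OF Z1 mpow_int_carrier]])
  moreover have "kron (1\<^sub>m (dim_row (Hobj aH X))) (H2 i j aH mH Y Z) \<in> carrier_mat ((?n*d)*((?m*?l)*d)) c"
    unfolding dim_Hobj c_def using kron_carrier_mat[OF one_carrier_mat[of "?n*d"] H2_carrier_mat[of Y Z]]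
    by (simp only: mult.assoc)
  moreover have "H2 i j aH mH X (kron Y Z) \<in> carrier_mat r ((?n*d)*((?m*?l)*d))"
    using H2_carrier_mat[of X "kron Y Z"] unfolding r_def by (simp only: dim_kron mult.assoc)
  ultimately show "hexagon_lhs X Y Z \<in> carrier_mat r c"
    by (meson mult_carrier_mat)
  have "Hmor aH (assoc_mat i j X Y Z) \<in> carrier_mat r r"
    unfolding Hmor_def assoc_mat_def r_def
    using kron_carrier_mat[OF kron_carrier_mat[OF kron_carrier_mat[OF X1 one_carrier_mat] Z1] one_carrier_mat] .
  moreover have "H2 i j aH mH (kron X Y) Z \<in> carrier_mat r (((?n*?m)*d)*(?l*d))"
    using H2_carrier_mat[of "kron X Y" Z] unfolding r_def by (simp only: dim_kron)
  moreover have "kron (H2 i j aH mH X Y) (1\<^sub>m (dim_row (Hobj aH Z))) \<in> carrier_mat (((?n*?m)*d)*(?l*d)) c"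
    unfolding dim_Hobj c_def using kron_carrier_mat[OF H2_carrier_mat one_carrier_mat] .
  ultimately show "hexagon_rhs X Y Z \<in> carrier_mat r c"
    by (meson mult_carrier_mat)
qed


abbreviation right_unit_composite :: "'a mat \<Rightarrow> 'a mat" where
  "right_unit_composite X \<equiv> Hmor aH (runit_mat i X) * H2 i j aH mH X unit_obj
     * kron (1\<^sub>m (dim_row (Hobj aH X))) (H0 etaH) * inv_mat (runit_mat i (Hobj aH X))"

abbreviation left_unit_composite :: "'a mat \<Rightarrow> 'a mat" where
  "left_unit_composite X \<equiv> Hmor aH (lunit_mat j X) * H2 i j aH mH unit_obj X
     * kron (H0 etaH) (1\<^sub>m (dim_row (Hobj aH X))) * inv_mat (lunit_mat j (Hobj aH X))"

lemma dim_unit_obj: "dim_row (unit_obj :: 'a mat) = 1"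
  by (simp add: unit_obj_def)

lemma etaH_mult_unit_vec: "etaH *\<^sub>v unit_vec 1 0 = hone etaH"
  unfolding hone_def vec_1_one ..

lemma H0_eq: "H0 etaH = etaH"
  unfolding H0_def by (rule kron_one_1_left)

lemma al_al_cancel: "v \<in> carrier_vec d \<Longrightarrow> l = - k \<Longrightarrow> al k *\<^sub>v (al l *\<^sub>v v) = v"
  by (simp add: al_al al_0)

lemma right_unit_composite_mult_vkron:
  assumes X: "is_obj X"
  shows "right_unit_composite X \<in> carrier_mat (dim_row X * d) (dim_row X * d)"
    and "x \<in> carrier_vec (dim_row X) \<Longrightarrow> a \<in> carrier_vec d \<Longrightarrow>
      right_unit_composite X *\<^sub>v vkron x a = vkron x (hmul mH (al (-1) *\<^sub>v a) (hone etaH))"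
proof -
  let ?n = "dim_row X"
  let ?X1 = "mpow_int X (i+1)" and ?X0 = "mpow_int X (-(i+1))"
  have X1: "?X1 \<in> carrier_mat ?n ?n" and X0: "?X0 \<in> carrier_mat ?n ?n" using mpow_int_obj_carrier X by auto
  let ?U1 = "Hmor aH (runit_mat i X)" and ?U2 = "H2 i j aH mH X unit_obj"
    and ?U3 = "kron (1\<^sub>m (dim_row (Hobj aH X))) (H0 etaH)" and ?U4 = "inv_mat (runit_mat i (Hobj aH X))"
  have U1: "?U1 = kron ?X1 (1\<^sub>m d)" unfolding Hmor_def runit_mat_def ..
  have U3: "?U3 = kron (1\<^sub>m (?n*d)) etaH" unfolding H0_eq dim_Hobj ..
  have U4: "?U4 = kron ?X0 (al (-(i+1)))" unfolding runit_mat_def by (rule inv_mat_mpow_int_Hobj[OF X])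
  have U1c: "?U1 \<in> carrier_mat (?n*d) (?n*d)" unfolding U1 using kron_carrier_mat[OF X1 one_carrier_mat] .
  have U2c: "?U2 \<in> carrier_mat (?n*d) ((?n*d)*d)" using H2_carrier_mat[of X unit_obj] unfolding dim_unit_obj by simp
  have U3c: "?U3 \<in> carrier_mat ((?n*d)*d) (?n*d)"
    unfolding U3 using kron_carrier_mat[OF one_carrier_mat etaH_carrier] by simp
  have U4c: "?U4 \<in> carrier_mat (?n*d) (?n*d)" unfolding U4 using kron_carrier_mat[OF X0 mpow_int_carrier] .
  have U12c: "?U1 * ?U2 \<in> carrier_mat (?n*d) ((?n*d)*d)" using mult_carrier_mat[OF U1c U2c] .
  have U123c: "?U1 * ?U2 * ?U3 \<in> carrier_mat (?n*d) (?n*d)" using mult_carrier_mat[OF U12c U3c] .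
  show "right_unit_composite X \<in> carrier_mat (?n*d) (?n*d)" using mult_carrier_mat[OF U123c U4c] .
  show "right_unit_composite X *\<^sub>v vkron x a = vkron x (hmul mH (al (-1) *\<^sub>v a) (hone etaH))"
    if x: "x \<in> carrier_vec ?n" and a: "a \<in> carrier_vec d" for x a
  proof -
    let ?x0 = "?X0 *\<^sub>v x" and ?a0 = "al (-(i+1)) *\<^sub>v a"
    have x0: "?x0 \<in> carrier_vec ?n" and a0: "?a0 \<in> carrier_vec d"
      using mult_mat_vec_carrier[OF X0 x] al_mult_vec_carrier[OF a] .
    have x0a0: "vkron ?x0 ?a0 \<in> carrier_vec (?n*d)" using vkron_carrier_vec[OF x0 a0] .
    have e: "unit_vec 1 0 \<in> carrier_vec (dim_row (unit_obj :: 'a mat))" unfolding dim_unit_obj by simp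
    have eh: "vkron (unit_vec 1 0) (hone etaH) \<in> carrier_vec d" unfolding vkron_unit_vec_1_left by simp
    have "right_unit_composite X *\<^sub>v vkron x a = (?U1 * ?U2 * ?U3) *\<^sub>v (?U4 *\<^sub>v vkron x a)"
      by (rule assoc_mult_mat_vec[OF U123c U4c vkron_carrier_vec[OF x a]])
    also have "?U4 *\<^sub>v vkron x a = vkron ?x0 ?a0" unfolding U4 by (rule kron_mult_vkron[OF X0 mpow_int_carrier x a])
    also have "(?U1 * ?U2 * ?U3) *\<^sub>v vkron ?x0 ?a0 = (?U1 * ?U2) *\<^sub>v (?U3 *\<^sub>v vkron ?x0 ?a0)"
      by (rule assoc_mult_mat_vec[OF U12c U3c x0a0])
    also have "?U3 *\<^sub>v vkron ?x0 ?a0 = vkron (vkron ?x0 ?a0) (vkron (unit_vec 1 0) (hone etaH))"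
      unfolding U3 vkron_unit_vec_1_left
      by (subst vkron_unit_vec_1_right[symmetric, of "vkron ?x0 ?a0"])
        (simp only: kron_mult_vkron[OF one_carrier_mat etaH_carrier x0a0 unit_vec_carrier] one_mult_mat_vec[OF x0a0]
          etaH_mult_unit_vec)
    also have "(?U1 * ?U2) *\<^sub>v \<dots> = ?U1 *\<^sub>v vkron ?x0 (hmul mH (al i *\<^sub>v ?a0) (al j *\<^sub>v hone etaH))"
      using assoc_mult_mat_vec[OF U1c U2c vkron_carrier_vec[OF x0a0 eh]]
      by (simp only: dim_unit_obj H2_mult_elementary[OF x0 a0 e hone_carrier] vkron_unit_vec_1_right mult_1_right)
    also have "\<dots> = vkron (?X1 *\<^sub>v ?x0) (hmul mH (al i *\<^sub>v ?a0) (al j *\<^sub>v hone etaH))"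
      unfolding U1 by (rule kron_one_mult_vkron[OF X1 x0 hmul_carrier])
    also have "\<dots> = vkron x (hmul mH (al (-1) *\<^sub>v a) (hone etaH))"
      using invertible_square_mat.mpow_int_cancel_vec[OF is_obj_invertible_square_mat[OF X] x, of "i+1"] a
      by (simp add: al_al al_hone)
    finally show "right_unit_composite X *\<^sub>v vkron x a = vkron x (hmul mH (al (-1) *\<^sub>v a) (hone etaH))" .
  qed
qed

lemma left_unit_composite_mult_vkron:
  assumes X: "is_obj X"
  shows "left_unit_composite X \<in> carrier_mat (dim_row X * d) (dim_row X * d)"
    and "x \<in> carrier_vec (dim_row X) \<Longrightarrow> a \<in> carrier_vec d \<Longrightarrow>
      left_unit_composite X *\<^sub>v vkron x a = vkron x (hmul mH (hone etaH) (al (-1) *\<^sub>v a))"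
proof -
  let ?n = "dim_row X"
  let ?X1 = "mpow_int X (j+1)" and ?X0 = "mpow_int X (-(j+1))"
  have X1: "?X1 \<in> carrier_mat ?n ?n" and X0: "?X0 \<in> carrier_mat ?n ?n" using mpow_int_obj_carrier X by auto
  let ?U1 = "Hmor aH (lunit_mat j X)" and ?U2 = "H2 i j aH mH unit_obj X"
    and ?U3 = "kron (H0 etaH) (1\<^sub>m (dim_row (Hobj aH X)))" and ?U4 = "inv_mat (lunit_mat j (Hobj aH X))"
  have U1: "?U1 = kron ?X1 (1\<^sub>m d)" unfolding Hmor_def lunit_mat_def ..
  have U3: "?U3 = kron etaH (1\<^sub>m (?n*d))" unfolding H0_eq dim_Hobj ..
  have U4: "?U4 = kron ?X0 (al (-(j+1)))" unfolding lunit_mat_def by (rule inv_mat_mpow_int_Hobj[OF X])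
  have U1c: "?U1 \<in> carrier_mat (?n*d) (?n*d)" unfolding U1 using kron_carrier_mat[OF X1 one_carrier_mat] .
  have U2c: "?U2 \<in> carrier_mat (?n*d) (d*(?n*d))" using H2_carrier_mat[of unit_obj X] unfolding dim_unit_obj by simp
  have U3c: "?U3 \<in> carrier_mat (d*(?n*d)) (?n*d)"
    unfolding U3 using kron_carrier_mat[OF etaH_carrier one_carrier_mat] by simp
  have U4c: "?U4 \<in> carrier_mat (?n*d) (?n*d)" unfolding U4 using kron_carrier_mat[OF X0 mpow_int_carrier] .
  have U12c: "?U1 * ?U2 \<in> carrier_mat (?n*d) (d*(?n*d))" using mult_carrier_mat[OF U1c U2c] .
  have U123c: "?U1 * ?U2 * ?U3 \<in> carrier_mat (?n*d) (?n*d)" using mult_carrier_mat[OF U12c U3c] .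
  show "left_unit_composite X \<in> carrier_mat (?n*d) (?n*d)" using mult_carrier_mat[OF U123c U4c] .
  show "left_unit_composite X *\<^sub>v vkron x a = vkron x (hmul mH (hone etaH) (al (-1) *\<^sub>v a))"
    if x: "x \<in> carrier_vec ?n" and a: "a \<in> carrier_vec d" for x a
  proof -
    let ?x0 = "?X0 *\<^sub>v x" and ?a0 = "al (-(j+1)) *\<^sub>v a"
    have x0: "?x0 \<in> carrier_vec ?n" and a0: "?a0 \<in> carrier_vec d"
      using mult_mat_vec_carrier[OF X0 x] al_mult_vec_carrier[OF a] .
    have x0a0: "vkron ?x0 ?a0 \<in> carrier_vec (?n*d)" using vkron_carrier_vec[OF x0 a0] .
    have e: "unit_vec 1 0 \<in> carrier_vec (dim_row (unit_obj :: 'a mat))" unfolding dim_unit_obj by simp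
    have eh: "vkron (unit_vec 1 0) (hone etaH) \<in> carrier_vec d" unfolding vkron_unit_vec_1_left by simp
    have "left_unit_composite X *\<^sub>v vkron x a = (?U1 * ?U2 * ?U3) *\<^sub>v (?U4 *\<^sub>v vkron x a)"
      by (rule assoc_mult_mat_vec[OF U123c U4c vkron_carrier_vec[OF x a]])
    also have "?U4 *\<^sub>v vkron x a = vkron ?x0 ?a0" unfolding U4 by (rule kron_mult_vkron[OF X0 mpow_int_carrier x a])
    also have "(?U1 * ?U2 * ?U3) *\<^sub>v vkron ?x0 ?a0 = (?U1 * ?U2) *\<^sub>v (?U3 *\<^sub>v vkron ?x0 ?a0)"
      by (rule assoc_mult_mat_vec[OF U12c U3c x0a0])
    also have "?U3 *\<^sub>v vkron ?x0 ?a0 = vkron (vkron (unit_vec 1 0) (hone etaH)) (vkron ?x0 ?a0)"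
      unfolding U3 vkron_unit_vec_1_left
      by (subst vkron_unit_vec_1_left[symmetric, of "vkron ?x0 ?a0"])
        (simp only: kron_mult_vkron[OF etaH_carrier one_carrier_mat unit_vec_carrier x0a0] one_mult_mat_vec[OF x0a0]
          etaH_mult_unit_vec)
    also have "(?U1 * ?U2) *\<^sub>v \<dots> = ?U1 *\<^sub>v vkron ?x0 (hmul mH (al i *\<^sub>v hone etaH) (al j *\<^sub>v ?a0))"
    proof -
      have "?U2 *\<^sub>v vkron (vkron (unit_vec 1 0) (hone etaH)) (vkron ?x0 ?a0)
          = vkron ?x0 (hmul mH (al i *\<^sub>v hone etaH) (al j *\<^sub>v ?a0))"
        by (subst H2_mult_elementary[OF e hone_carrier x0 a0]) (simp only: vkron_unit_vec_1_left)
      then show ?thesis by (simp only: assoc_mult_mat_vec[OF U1c U2c vkron_carrier_vec[OF eh x0a0]])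
  qed
  also have "\<dots> = vkron (?X1 *\<^sub>v ?x0) (hmul mH (al i *\<^sub>v hone etaH) (al j *\<^sub>v ?a0))"
    unfolding U1 by (rule kron_one_mult_vkron[OF X1 x0 hmul_carrier])
  also have "\<dots> = vkron x (hmul mH (hone etaH) (al (-1) *\<^sub>v a))"
    using invertible_square_mat.mpow_int_cancel_vec[OF is_obj_invertible_square_mat[OF X] x, of "j+1"] a
    by (simp add: al_al al_hone)
  finally show "left_unit_composite X *\<^sub>v vkron x a = vkron x (hmul mH (hone etaH) (al (-1) *\<^sub>v a))" .
  qed
qed

lemma hexagon_identity_sides:
  assumes a: "a \<in> carrier_vec d" and b: "b \<in> carrier_vec d" and c: "c \<in> carrier_vec d"
  shows "hmul mH (al i *\<^sub>v (al (i+1) *\<^sub>v a)) (al j *\<^sub>v hmul mH (al i *\<^sub>v b) (al j *\<^sub>v (al (-j-1) *\<^sub>v c)))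
      = hmul mH (aH *\<^sub>v (al (2*i) *\<^sub>v a)) (hmul mH (al (i+j) *\<^sub>v b) (al (j-1) *\<^sub>v c))"
    "hmul mH (al i *\<^sub>v hmul mH (al i *\<^sub>v a) (al j *\<^sub>v b)) (al j *\<^sub>v c)
      = hmul mH (hmul mH (al (2*i) *\<^sub>v a) (al (i+j) *\<^sub>v b)) (aH *\<^sub>v (al (j-1) *\<^sub>v c))"
proof -
  have "al i *\<^sub>v (al (i+1) *\<^sub>v a) = aH *\<^sub>v (al (2*i) *\<^sub>v a)"
    using a by (simp add: al_al aH_eq_al_1 algebra_simps)
  moreover have "al j *\<^sub>v hmul mH (al i *\<^sub>v b) (al j *\<^sub>v (al (-j-1) *\<^sub>v c))
      = hmul mH (al (i+j) *\<^sub>v b) (al (j-1) *\<^sub>v c)"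
    using b c by (simp add: al_al al_hmul algebra_simps)
  ultimately show "hmul mH (al i *\<^sub>v (al (i+1) *\<^sub>v a)) (al j *\<^sub>v hmul mH (al i *\<^sub>v b) (al j *\<^sub>v (al (-j-1) *\<^sub>v c)))
      = hmul mH (aH *\<^sub>v (al (2*i) *\<^sub>v a)) (hmul mH (al (i+j) *\<^sub>v b) (al (j-1) *\<^sub>v c))"
    by simp
  have "al i *\<^sub>v hmul mH (al i *\<^sub>v a) (al j *\<^sub>v b) = hmul mH (al (2*i) *\<^sub>v a) (al (i+j) *\<^sub>v b)"
    using a b by (simp add: al_al al_hmul algebra_simps)
  moreover have "al j *\<^sub>v c = aH *\<^sub>v (al (j-1) *\<^sub>v c)"
    using c by (simp add: al_al aH_eq_al_1)
  ultimately show "hmul mH (al i *\<^sub>v hmul mH (al i *\<^sub>v a) (al j *\<^sub>v b)) (al j *\<^sub>v c)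
      = hmul mH (hmul mH (al (2*i) *\<^sub>v a) (al (i+j) *\<^sub>v b)) (aH *\<^sub>v (al (j-1) *\<^sub>v c))"
    by simp
qed


lemma hexagon_identity_iff_hom_assoc:
  "(\<forall>a\<in>carrier_vec d. \<forall>b\<in>carrier_vec d. \<forall>c\<in>carrier_vec d.
      hmul mH (al i *\<^sub>v (al (i+1) *\<^sub>v a)) (al j *\<^sub>v hmul mH (al i *\<^sub>v b) (al j *\<^sub>v (al (-j-1) *\<^sub>v c)))
      = hmul mH (al i *\<^sub>v hmul mH (al i *\<^sub>v a) (al j *\<^sub>v b)) (al j *\<^sub>v c))
   \<longleftrightarrow> (\<forall>a\<in>carrier_vec d. \<forall>b\<in>carrier_vec d. \<forall>c\<in>carrier_vec d.
      hmul mH (aH *\<^sub>v a) (hmul mH b c) = hmul mH (hmul mH a b) (aH *\<^sub>v c))"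
  (is "?hexagon \<longleftrightarrow> ?assoc")
proof
  assume hexagon: ?hexagon
  show ?assoc
  proof (intro ballI)
    fix a b c :: "'a vec" assume a: "a \<in> carrier_vec d" and b: "b \<in> carrier_vec d" and c: "c \<in> carrier_vec d"
    let ?a = "al (-(2*i)) *\<^sub>v a" and ?b = "al (-(i+j)) *\<^sub>v b" and ?c = "al (1-j) *\<^sub>v c"
    have "al (2*i) *\<^sub>v ?a = a" "al (i+j) *\<^sub>v ?b = b" "al (j-1) *\<^sub>v ?c = c"
      using a b c by (simp_all add: al_al_cancel)
    moreover have "?a \<in> carrier_vec d" "?b \<in> carrier_vec d" "?c \<in> carrier_vec d"
      using a b c by (simp_all add: al_mult_vec_carrier)
    ultimately show "hmul mH (aH *\<^sub>v a) (hmul mH b c) = hmul mH (hmul mH a b) (aH *\<^sub>v c)"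
      using hexagon by (metis hexagon_identity_sides)
  qed
next
  assume ?assoc
  then show ?hexagon by (simp add: hexagon_identity_sides al_mult_vec_carrier)
qed

lemma unit_identities_iff:
  "(\<forall>a\<in>carrier_vec d. hmul mH (al (-1) *\<^sub>v a) (hone etaH) = a \<and> hmul mH (hone etaH) (al (-1) *\<^sub>v a) = a)
   \<longleftrightarrow> (\<forall>a\<in>carrier_vec d. hmul mH (hone etaH) a = aH *\<^sub>v a \<and> hmul mH a (hone etaH) = aH *\<^sub>v a)"
proof -
  have "al (-1) *\<^sub>v (aH *\<^sub>v a) = a" "aH *\<^sub>v (al (-1) *\<^sub>v a) = a" if "a \<in> carrier_vec d" for a
    using that by (simp_all only: aH_eq_al_1 al_al_cancel)
  then show ?thesis
    by (metis al_mult_vec_carrier mult_mat_vec_carrier[OF carrier])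
qed

lemma hexagon_axiom_iff:
  "(\<forall>X Y Z. is_obj X \<longrightarrow> is_obj Y \<longrightarrow> is_obj Z \<longrightarrow> hexagon_lhs X Y Z = hexagon_rhs X Y Z)
   \<longleftrightarrow> (\<forall>a\<in>carrier_vec d. \<forall>b\<in>carrier_vec d. \<forall>c\<in>carrier_vec d.
      hmul mH (aH *\<^sub>v a) (hmul mH b c) = hmul mH (hmul mH a b) (aH *\<^sub>v c))"
  unfolding hexagon_identity_iff_hom_assoc[symmetric]
proof (intro iffI allI impI ballI)
  fix a b c :: "'a vec" assume hexagon: "\<forall>X Y Z. is_obj X \<longrightarrow> is_obj Y \<longrightarrow> is_obj Z \<longrightarrow> hexagon_lhs X Y Z = hexagon_rhs X Y Z"
    and a: "a \<in> carrier_vec d" and b: "b \<in> carrier_vec d" and c: "c \<in> carrier_vec d"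
  let ?U = "unit_obj :: 'a mat" and ?e = "unit_vec 1 0 :: 'a vec"
  have e: "?e \<in> carrier_vec (dim_row ?U)" by (simp add: dim_unit_obj)
  have U1: "mpow_int ?U k *\<^sub>v ?e = ?e" for k by (simp add: mpow_int_unit_obj)
  have "hexagon_lhs ?U ?U ?U = hexagon_rhs ?U ?U ?U" using hexagon is_obj_unit_obj by blast
  from arg_cong[OF this, of "\<lambda>M. M *\<^sub>v vkron (vkron (vkron ?e a) (vkron ?e b)) (vkron ?e c)"]
  show "hmul mH (al i *\<^sub>v (al (i+1) *\<^sub>v a)) (al j *\<^sub>v hmul mH (al i *\<^sub>v b) (al j *\<^sub>v (al (-j-1) *\<^sub>v c)))
      = hmul mH (al i *\<^sub>v hmul mH (al i *\<^sub>v a) (al j *\<^sub>v b)) (al j *\<^sub>v c)"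
    unfolding hexagon_lhs_mult_vkron[OF is_obj_unit_obj is_obj_unit_obj is_obj_unit_obj e e e a b c]
      hexagon_rhs_mult_vkron[OF is_obj_unit_obj is_obj_unit_obj is_obj_unit_obj e e e a b c]
    by (simp only: U1 vkron_unit_vec_1_left)
next
  fix X Y Z :: "'a mat" assume identity: "\<forall>a\<in>carrier_vec d. \<forall>b\<in>carrier_vec d. \<forall>c\<in>carrier_vec d.
      hmul mH (al i *\<^sub>v (al (i+1) *\<^sub>v a)) (al j *\<^sub>v hmul mH (al i *\<^sub>v b) (al j *\<^sub>v (al (-j-1) *\<^sub>v c)))
      = hmul mH (al i *\<^sub>v hmul mH (al i *\<^sub>v a) (al j *\<^sub>v b)) (al j *\<^sub>v c)"
    and X: "is_obj X" and Y: "is_obj Y" and Z: "is_obj Z"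
  show "hexagon_lhs X Y Z = hexagon_rhs X Y Z"
    by (rule mat_eq_on_vkron6I[OF hexagon_carrier[OF X Z]])
      (simp only: hexagon_lhs_mult_vkron[OF X Y Z] hexagon_rhs_mult_vkron[OF X Y Z] identity)
qed

lemma unit_axioms_iff:
  "(\<forall>X. is_obj X \<longrightarrow> right_unit_composite X = 1\<^sub>m (dim_row (Hobj aH X))
      \<and> left_unit_composite X = 1\<^sub>m (dim_row (Hobj aH X)))
   \<longleftrightarrow> (\<forall>a\<in>carrier_vec d. hmul mH (hone etaH) a = aH *\<^sub>v a \<and> hmul mH a (hone etaH) = aH *\<^sub>v a)"
  unfolding unit_identities_iff[symmetric]
proof (intro iffI allI impI ballI conjI)
  fix a :: "'a vec" assume units: "\<forall>X. is_obj X \<longrightarrow> right_unit_composite X = 1\<^sub>m (dim_row (Hobj aH X))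
      \<and> left_unit_composite X = 1\<^sub>m (dim_row (Hobj aH X))"
    and a: "a \<in> carrier_vec d"
  let ?U = "unit_obj :: 'a mat" and ?e = "unit_vec 1 0 :: 'a vec"
  have e: "?e \<in> carrier_vec (dim_row ?U)" by (simp add: dim_unit_obj)
  have ea: "vkron ?e a \<in> carrier_vec (dim_row (Hobj aH ?U))" unfolding dim_Hobj using vkron_carrier_vec[OF e a] .
  have "right_unit_composite ?U = 1\<^sub>m (dim_row (Hobj aH ?U))" "left_unit_composite ?U = 1\<^sub>m (dim_row (Hobj aH ?U))"
    using units is_obj_unit_obj by blast+
  from this[THEN arg_cong, of "\<lambda>M. M *\<^sub>v vkron ?e a"]
  show "hmul mH (al (-1) *\<^sub>v a) (hone etaH) = a" "hmul mH (hone etaH) (al (-1) *\<^sub>v a) = a"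
    unfolding right_unit_composite_mult_vkron(2)[OF is_obj_unit_obj e a]
      left_unit_composite_mult_vkron(2)[OF is_obj_unit_obj e a] one_mult_mat_vec[OF ea]
    by (simp_all only: vkron_unit_vec_1_left)
next
  fix X :: "'a mat" assume units: "\<forall>a\<in>carrier_vec d. hmul mH (al (-1) *\<^sub>v a) (hone etaH) = a
      \<and> hmul mH (hone etaH) (al (-1) *\<^sub>v a) = a"
    and X: "is_obj X"
  have "right_unit_composite X = 1\<^sub>m (dim_row X * d)"
    by (rule mat_eq_on_vkronI[OF right_unit_composite_mult_vkron(1)[OF X] one_carrier_mat])
      (simp add: right_unit_composite_mult_vkron(2)[OF X] units)
  then show "right_unit_composite X = 1\<^sub>m (dim_row (Hobj aH X))"
    by (simp only: dim_Hobj)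
  have "left_unit_composite X = 1\<^sub>m (dim_row X * d)"
    by (rule mat_eq_on_vkronI[OF left_unit_composite_mult_vkron(1)[OF X] one_carrier_mat])
      (simp add: left_unit_composite_mult_vkron(2)[OF X] units)
  then show "left_unit_composite X = 1\<^sub>m (dim_row (Hobj aH X))"
    by (simp only: dim_Hobj)
qed

lemma monoidal_functor_Hdd_iff_hom_algebra:
  "monoidal_functor_Hdd i j aH mH etaH \<longleftrightarrow> hom_algebra aH mH etaH"
  unfolding monoidal_functor_Hdd_def hom_algebra_def hexagon_axiom_iff unit_axioms_iff
  using H2_is_mor H0_is_mor H2_natural aH_hone by blast

end

theorem lemma4p2:
  fixes i j :: int
    and aH mH etaH :: "'a::field_char_0 mat"
  assumes "is_obj aH"
    and "is_mor (kron aH aH) aH mH"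
    and "is_mor unit_obj aH etaH"
  shows "monoidal_functor_Hdd i j aH mH etaH \<longleftrightarrow> hom_algebra aH mH etaH"
proof -
  interpret hom_algebra_data i j aH mH etaH
    using assms by unfold_locales
  show ?thesis by (rule monoidal_functor_Hdd_iff_hom_algebra)
qed

end
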